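(* Let $f$ be a subluminal librational wave. Then there exists a real $\lambda_*>0$ with $\lambda_*\in\sigma(\mathrm{P})$, and one of the corresponding Floquet multipliers of (P) satisfies $\rho(\lambda_* )=1$.
   Context: A traveling wave of speed $c$ ($c^2\neq1$) of $u_{tt}-u_{xx}+\sin u=0$ is a real solution $f$ of $(c^2-1)f''+\sin f=0$, with energy $E$ given by $\tfrac12(c^2-1)(f')^2+1-\cos f=E$; it is subluminal librational if $c^2<1$ and $0<E<2$, and then periodic with fundamental period $T$ (smallest $T>0$ with $f(z+T)=f(z)\pmod{2\pi}$). Let $\gamma=1/(c^2-1)$. Equation (P): $p''-2c\gamma\lambda p'+\gamma(\lambda^2+\cos f(z))p=0$, written as a first-order system for $(p,p')$ with fundamental matrix $F(z;\lambda)$, $F(0;\lambda)=I$; its Floquet multipliers are the eigenvalues of $F(T;\lambda)$. $\sigma(\mathrm{P})$ is the set of $\lambda\in\mathbb{C}$ for which (P) has a nontrivial solution bounded on $\mathbb{R}$. *)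

theory Defs
  imports "HOL-Analysis.Analysis"
begin

definition traveling_wave :: "real \<Rightarrow> (real \<Rightarrow> real) \<Rightarrow> bool" where
  "traveling_wave c f \<longleftrightarrow>
     (\<forall>z. f differentiable at z \<and> deriv f differentiable at z \<and>
          (c^2 - 1) * deriv (deriv f) z + sin (f z) = 0)"

definition wave_energy :: "real \<Rightarrow> (real \<Rightarrow> real) \<Rightarrow> real \<Rightarrow> bool" where
  "wave_energy c f E \<longleftrightarrow>
     (\<forall>z. (1/2) * (c^2 - 1) * (deriv f z)^2 + 1 - cos (f z) = E)"

definition subluminal_librational :: "real \<Rightarrow> (real \<Rightarrow> real) \<Rightarrow> real \<Rightarrow> bool" where
  "subluminal_librational c f E \<longleftrightarrow>
     traveling_wave c f \<and> wave_energy c f E \<and> c^2 < 1 \<and> 0 < E \<and> E < 2"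

definition period_mod_2pi :: "(real \<Rightarrow> real) \<Rightarrow> real \<Rightarrow> bool" where
  "period_mod_2pi f T \<longleftrightarrow> (\<forall>z. \<exists>k::int. f (z + T) = f z + 2 * pi * of_int k)"

definition fundamental_period :: "(real \<Rightarrow> real) \<Rightarrow> real \<Rightarrow> bool" where
  "fundamental_period f T \<longleftrightarrow>
     0 < T \<and> period_mod_2pi f T \<and> (\<forall>S. 0 < S \<and> S < T \<longrightarrow> \<not> period_mod_2pi f S)"

definition gam :: "real \<Rightarrow> real" where
  "gam c = 1 / (c^2 - 1)"

definition solP :: "real \<Rightarrow> (real \<Rightarrow> real) \<Rightarrow> complex \<Rightarrow> (real \<Rightarrow> complex) \<Rightarrow> bool" where
  "solP c f lam p \<longleftrightarrow>
     (\<exists>q. \<forall>z. (p has_vector_derivative q z) (at z) \<and>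
              (q has_vector_derivative
                 (2 * of_real c * of_real (gam c) * lam * q z
                  - of_real (gam c) * (lam^2 + of_real (cos (f z))) * p z)) (at z))"

definition specP :: "real \<Rightarrow> (real \<Rightarrow> real) \<Rightarrow> complex set" where
  "specP c f = {lam. \<exists>p. solP c f lam p \<and> (\<exists>z. p z \<noteq> 0) \<and> bounded (range p)}"

definition coefP :: "real \<Rightarrow> (real \<Rightarrow> real) \<Rightarrow> complex \<Rightarrow> real \<Rightarrow> complex^2^2" where
  "coefP c f lam z = (\<chi> i j.
      if i = 1 then (if j = 1 then 0 else 1)
      else (if j = 1 then - of_real (gam c) * (lam^2 + of_real (cos (f z)))
            else 2 * of_real c * of_real (gam c) * lam))"

definition fund_matrix :: "real \<Rightarrow> (real \<Rightarrow> real) \<Rightarrow> complex \<Rightarrow> (real \<Rightarrow> complex^2^2) \<Rightarrow> bool" where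
  "fund_matrix c f lam F \<longleftrightarrow>
     F 0 = mat 1 \<and> (\<forall>z. (F has_vector_derivative (coefP c f lam z ** F z)) (at z))"

definition floquet_multiplier :: "real \<Rightarrow> (real \<Rightarrow> real) \<Rightarrow> real \<Rightarrow> complex \<Rightarrow> complex \<Rightarrow> bool" where
  "floquet_multiplier c f T lam \<rho> \<longleftrightarrow>
     (\<exists>F. fund_matrix c f lam F \<and> det (F T - mat \<rho>) = 0)"

end

theory Submission
  imports Defs
begin

text \<open>
  Substituting \<open>p(z) = exp(c\<gamma>\<lambda>z) w(z)\<close> turns (P) into the Hill equation \<open>w'' = Q\<^sub>\<lambda> w\<close>
  with the \<open>T\<close>-periodic potential \<open>Q\<^sub>\<lambda> = \<gamma>\<^sup>2\<lambda>\<^sup>2 - \<gamma> cos f\<close>. So (P) has the Floquet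
  multiplier 1 at a real \<open>\<lambda>\<close> as soon as the Hill equation has the multiplier
  \<open>\<kappa> = exp(-c\<gamma>\<lambda>T)\<close>, that is, as soon as the trace \<open>u(z\<^sub>0+T) + v'(z\<^sub>0+T)\<close> of its monodromy
  equals \<open>\<kappa> + 1/\<kappa>\<close>; the corresponding solution of (P) is periodic, hence bounded, so \<open>\<lambda>\<close>
  also lies in \<open>\<sigma>(P)\<close>.

  Let \<open>z\<^sub>0\<close> be a maximum of \<open>f\<close> and \<open>v\<close> the solution with \<open>v(z\<^sub>0) = 0\<close>, \<open>v'(z\<^sub>0) = 1\<close>. At
  \<open>\<lambda> = 0\<close>, \<open>v\<close> is a multiple of \<open>f'\<close>, which also vanishes at a minimum \<open>z\<^sub>1\<close> and at \<open>z\<^sub>0 + T\<close>;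
  since the Pruefer angle of \<open>v\<close> crosses multiples of \<open>\<pi>\<close> only upwards, it increases by at
  least \<open>2\<pi>\<close> over a period. For large \<open>\<lambda>\<close> the potential is positive and the angle increases
  by less than \<open>\<pi>/2\<close>. By continuity in \<open>\<lambda>\<close> it increases by exactly \<open>\<pi>\<close> for some \<open>\<lambda>\<^sub>D > 0\<close>;
  there \<open>v(z\<^sub>0+T) = 0 > v'(z\<^sub>0+T)\<close>, and the Wronskian identity forces the trace to be at most
  \<open>-2\<close>, whereas for large \<open>\<lambda>\<close> the trace exceeds \<open>2 cosh(c\<gamma>\<lambda>T)\<close>. The intermediate value
  theorem gives \<open>\<lambda>\<^sub>*\<close>.
\<close>

lemma DERIV_imp_continuous_on:
  fixes f :: "real \<Rightarrow> real"
  assumes "\<And>s. (f has_real_derivative f' s) (at s)"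
  shows "continuous_on S f"
  using assms by (meson DERIV_continuous continuous_at_imp_continuous_on)

lemma DERIV_abs_diff_le_comparison:
  fixes G h :: "real \<Rightarrow> real"
  assumes ab: "a \<le> b"
    and dG: "\<And>s. (G has_real_derivative g s) (at s)"
    and dh: "\<And>s. (h has_real_derivative h' s) (at s)"
    and le: "\<And>s. a < s \<Longrightarrow> s < b \<Longrightarrow> \<bar>g s\<bar> \<le> h' s"
  shows "\<bar>G b - G a\<bar> \<le> h b - h a"
proof -
  have "h a - G a \<le> h b - G b"
  proof (rule DERIV_nonneg_imp_increasing_open[OF ab])
    fix s assume "a < s" "s < b"
    with le[of s] show "\<exists>y. ((\<lambda>s. h s - G s) has_real_derivative y) (at s) \<and> 0 \<le> y"
      using DERIV_diff[OF dh dG] by force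
  qed (rule DERIV_imp_continuous_on[OF DERIV_diff[OF dh dG]])
  moreover have "h a + G a \<le> h b + G b"
  proof (rule DERIV_nonneg_imp_increasing_open[OF ab])
    fix s assume "a < s" "s < b"
    with le[of s] show "\<exists>y. ((\<lambda>s. h s + G s) has_real_derivative y) (at s) \<and> 0 \<le> y"
      using DERIV_add[OF dh dG] by force
  qed (rule DERIV_imp_continuous_on[OF DERIV_add[OF dh dG]])
  ultimately show ?thesis by linarith
qed

lemma DERIV_bounded_imp_lipschitz:
  fixes g :: "real \<Rightarrow> real"
  assumes dg: "\<And>s. (g has_real_derivative g' s) (at s)"
    and bd: "\<And>s. min z z' \<le> s \<Longrightarrow> s \<le> max z z' \<Longrightarrow> \<bar>g' s\<bar> \<le> L"
  shows "\<bar>g z - g z'\<bar> \<le> L * \<bar>z - z'\<bar>"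
proof -
  have "\<bar>g (max z z') - g (min z z')\<bar> \<le> L * max z z' - L * min z z'"
    by (rule DERIV_abs_diff_le_comparison[OF _ dg, where h' = "\<lambda>_. L"])
       (auto intro!: derivative_eq_intros bd)
  then show ?thesis by (cases "z \<le> z'") (auto simp: abs_minus_commute algebra_simps)
qed

lemma antiderivative_power_bound:
  fixes G g :: "real \<Rightarrow> real"
  assumes G0: "G a = 0" and dG: "\<And>s. (G has_real_derivative g s) (at s)"
    and bd: "\<And>s. \<bar>g s\<bar> \<le> C * \<bar>s - a\<bar>^n"
  shows "\<bar>G z\<bar> \<le> C * \<bar>z - a\<bar>^(Suc n) / (Suc n)"
proof (cases "a \<le> z")
  case True
  have dh: "((\<lambda>s. C * (s - a)^(Suc n) / (Suc n)) has_real_derivative C * (s - a)^n) (at s)" for s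
    by (rule derivative_eq_intros refl | simp)+
  have "\<bar>G z - G a\<bar> \<le> C * (z - a)^(Suc n) / (Suc n) - C * (a - a)^(Suc n) / (Suc n)"
    by (rule DERIV_abs_diff_le_comparison[OF True dG dh]) (metis abs_of_pos bd diff_gt_0_iff_gt)
  then show ?thesis using True G0 by simp
next
  case False
  have dh: "((\<lambda>s. - C * (a - s)^(Suc n) / (Suc n)) has_real_derivative C * (a - s)^n) (at s)" for s
    by (rule derivative_eq_intros refl | simp)+
  have "\<bar>G a - G z\<bar> \<le> - C * (a - a)^(Suc n) / (Suc n) - - C * (a - z)^(Suc n) / (Suc n)"
    by (rule DERIV_abs_diff_le_comparison[OF _ dG dh])
       (use False in simp, metis abs_minus_commute abs_of_pos bd diff_gt_0_iff_gt)
  then show ?thesis using False G0 by (simp add: abs_minus_commute)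
qed

lemma gronwall_affine:
  fixes e e' :: "real \<Rightarrow> real"
  assumes ab: "a \<le> b" and K: "K \<ge> 0" and \<beta>: "\<beta> \<ge> 0"
    and de: "\<And>s. (e has_real_derivative e' s) (at s)"
    and le: "\<And>s. a \<le> s \<Longrightarrow> s \<le> b \<Longrightarrow> e' s \<le> K * e s + \<beta>"
  shows "e b \<le> (e a + \<beta> * (b - a)) * exp (K * (b - a))"
proof -
  define \<psi> where "\<psi> s = e s * exp (- K * (s - a)) - \<beta> * (s - a)" for s
  have d\<psi>: "(\<psi> has_real_derivative
      (e' s * exp (- K * (s - a)) - K * e s * exp (- K * (s - a)) - \<beta>)) (at s)" for s
    unfolding \<psi>_def by (rule derivative_eq_intros de refl | simp)+
  have "\<psi> b \<le> \<psi> a"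
  proof (rule DERIV_nonpos_imp_decreasing_open[OF ab])
    fix x assume x: "a < x" "x < b"
    have "(e' x - K * e x) * exp (- K * (x - a)) \<le> \<beta> * exp (- K * (x - a))"
      using le[of x] x by (intro mult_right_mono) auto
    also have "\<dots> \<le> \<beta>" using K x \<beta> by (simp add: mult_left_le)
    finally show "\<exists>y. (\<psi> has_real_derivative y) (at x) \<and> y \<le> 0"
      using d\<psi> by (force simp: algebra_simps)
  qed (rule DERIV_imp_continuous_on[OF d\<psi>])
  then have "e b * exp (- K * (b - a)) * exp (K * (b - a)) \<le> (e a + \<beta> * (b - a)) * exp (K * (b - a))"
    unfolding \<psi>_def by (intro mult_right_mono) auto
  then show ?thesis by (simp add: mult.assoc flip: exp_add)
qed

lemma exists_antiderivative:
  fixes g :: "real \<Rightarrow> real"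
  assumes cg: "continuous_on UNIV g"
  shows "\<exists>G. G a = 0 \<and> (\<forall>z. (G has_real_derivative g z) (at z))"
proof -
  define G where "G z = integral {a..z} g - integral {z..a} g" for z
  have int: "g integrable_on {u..v}" for u v
    by (rule integrable_continuous_real) (use cg continuous_on_subset in blast)
  have G_from: "G y = integral {m..y} g - integral {m..a} g" if "m \<le> y" "m \<le> a" for m y
  proof (cases "a \<le> y")
    case True
    then have "integral {m..a} g + integral {a..y} g = integral {m..y} g"
      using int that by (intro Henstock_Kurzweil_Integration.integral_combine) auto
    moreover have "integral {y..a} g = 0" using True by (cases "y = a") auto
    ultimately show ?thesis unfolding G_def by simp
  next
    case False
    then have "integral {m..y} g + integral {y..a} g = integral {m..a} g"
      using int that by (intro Henstock_Kurzweil_Integration.integral_combine) auto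
    then show ?thesis using False unfolding G_def by simp
  qed
  have "(G has_real_derivative g x) (at x)" for x
  proof -
    define m where "m = min x a - 1"
    have "((\<lambda>y. integral {m..y} g) has_real_derivative g x) (at x within {m..x+1})"
      by (rule integral_has_real_derivative) (auto simp: m_def intro: continuous_on_subset[OF cg])
    then have "((\<lambda>y. integral {m..y} g - integral {m..a} g) has_real_derivative g x) (at x)"
      using at_within_Icc_at[of m x "x+1"] by (auto simp: m_def intro!: derivative_eq_intros)
    then show ?thesis
      by (rule has_field_derivative_transform_within_open[where S="{m<..}"])
         (auto simp: m_def intro!: G_from[symmetric])
  qed
  moreover have "G a = 0" unfolding G_def by simp
  ultimately show ?thesis by blast
qed

definition antiderivative :: "real \<Rightarrow> (real \<Rightarrow> real) \<Rightarrow> real \<Rightarrow> real" where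
  "antiderivative a g = (SOME G. G a = 0 \<and> (\<forall>z. (G has_real_derivative g z) (at z)))"

lemma antiderivative:
  assumes "continuous_on UNIV g"
  shows "antiderivative a g a = 0" "(antiderivative a g has_real_derivative g z) (at z)"
  using someI_ex[OF exists_antiderivative[OF assms, of a]] unfolding antiderivative_def by blast+

lemma summable_exp_majorant: "summable (\<lambda>n. M * (c::real)^n / fact n)"
  using summable_mult[OF summable_exp[of c], of M] by (simp add: field_simps)

lemma DERIV_series_exp_majorant:
  fixes F G :: "nat \<Rightarrow> real \<Rightarrow> real"
  assumes dF0: "\<And>z. (F 0 has_real_derivative 0) (at z)"
    and dF: "\<And>n z. (F (Suc n) has_real_derivative G n z) (at z)"
    and bF: "\<And>n z. \<bar>F n z\<bar> \<le> M * (K * \<bar>z - a\<bar>)^n / fact n"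
    and bG: "\<And>n z. \<bar>G n z\<bar> \<le> N * (K * \<bar>z - a\<bar>)^n / fact n"
    and K: "K \<ge> 0" and N: "N \<ge> 0"
  shows "((\<lambda>z. \<Sum>n. F n z) has_real_derivative (\<Sum>n. G n z)) (at z)"
proof -
  define F' where "F' n s = (case n of 0 \<Rightarrow> 0 | Suc m \<Rightarrow> G m s)" for n s
  define S where "S = {z - 1..z + 1}"
  define R where "R = \<bar>z - a\<bar> + 1"
  have pw: "N * (K * \<bar>s - a\<bar>)^n / fact n \<le> N * (K * R)^n / fact n" if "s \<in> S" for s n
    using that K N
    by (intro divide_right_mono mult_left_mono power_mono) (auto simp: S_def R_def)
  have dF': "(F n has_real_derivative F' n s) (at s within S)" for n s
    by (cases n) (auto simp: F'_def intro: has_field_derivative_at_within dF0 dF)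
  define Mb where "Mb n = (case n of 0 \<Rightarrow> 0 | Suc m \<Rightarrow> N * (K * R)^m / fact m)" for n
  have "summable (\<lambda>n. Mb (Suc n))" by (simp add: Mb_def summable_exp_majorant)
  then have "summable Mb" by (simp add: summable_Suc_iff)
  then have "uniformly_convergent_on S (\<lambda>n x. \<Sum>i<n. F' i x)"
    by (rule Weierstrass_m_test'[rotated])
       (auto simp: F'_def Mb_def split: nat.split intro: order.trans[OF bG pw])
  moreover have "summable (\<lambda>n. F n z)"
    by (rule summable_comparison_test[OF _ summable_exp_majorant[of M "K * \<bar>z - a\<bar>"]])
       (use bF in auto)
  ultimately have "((\<lambda>x. \<Sum>n. F n x) has_real_derivative (\<Sum>n. F' n z)) (at z)"
    by (intro has_field_derivative_series'(2)[OF _ dF'])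
       (auto simp: S_def interior_atLeastAtMost_real)
  moreover have "summable (\<lambda>n. G n z)"
    by (rule summable_comparison_test[OF _ summable_exp_majorant[of N "K * \<bar>z - a\<bar>"]])
       (use bG in auto)
  then have "summable (\<lambda>n. F' n z)"
    by (subst summable_Suc_iff[symmetric]) (simp add: F'_def)
  then have "(\<Sum>n. F' n z) = (\<Sum>n. G n z)"
    by (subst suminf_split_initial_segment[of _ 1]) (simp_all add: F'_def)
  ultimately show ?thesis by simp
qed

lemma DERIV_sign_change_at_simple_zero:
  fixes g :: "real \<Rightarrow> real"
  assumes dg: "(g has_real_derivative D) (at s)" and "g s = 0" "D \<noteq> 0"
  obtains d where "d > 0" "\<And>t. s < t \<Longrightarrow> t < s + d \<Longrightarrow> g t * D > 0"
    "\<And>t. s - d < t \<Longrightarrow> t < s \<Longrightarrow> g t * D < 0"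
proof -
  have pos: "D * D > 0" using assms(3) not_real_square_gt_zero by blast
  have dgD: "((\<lambda>t. g t * D) has_real_derivative D * D) (at s)"
    using dg by (auto intro!: derivative_eq_intros)
  obtain d1 where d1: "d1 > 0" "\<forall>h>0. h < d1 \<longrightarrow> g s * D < g (s + h) * D"
    using DERIV_pos_inc_right[OF dgD pos] by blast
  obtain d2 where d2: "d2 > 0" "\<forall>h>0. h < d2 \<longrightarrow> g (s - h) * D < g s * D"
    using DERIV_pos_inc_left[OF dgD pos] by blast
  show ?thesis
  proof (rule that[of "min d1 d2"])
    show "min d1 d2 > 0" using d1 d2 by simp
    show "g t * D > 0" if "s < t" "t < s + min d1 d2" for t
      using d1(2)[rule_format, of "t - s"] that assms(2) by simp
    show "g t * D < 0" if "s - min d1 d2 < t" "t < s" for t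
      using d2(2)[rule_format, of "s - t"] that assms(2) by simp
  qed
qed

lemma periodic_shift_int:
  fixes g :: "real \<Rightarrow> 'a"
  assumes "\<And>z. g (z + T) = g z"
  shows "g (z + of_int n * T) = g z"
proof (induction n arbitrary: z rule: int_induct[where k=0])
  case (step1 i)
  then show ?case using assms[of "z + of_int i * T"] by (simp add: algebra_simps)
next
  case (step2 i)
  then show ?case using assms[of "z + of_int (i - 1) * T"] by (simp add: algebra_simps)
qed simp

lemma periodic_value_in_period:
  fixes g :: "real \<Rightarrow> 'a"
  assumes "\<And>z. g (z + T) = g z" and T: "T > 0"
  obtains r where "0 \<le> r" "r \<le> T" "g z = g r"
proof -
  define n where "n = \<lfloor>z / T\<rfloor>"
  have "of_int n * T \<le> z" "z < (of_int n + 1) * T"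
    using T floor_divide_lower[OF T, of z] floor_divide_upper[OF T, of z] by (simp_all add: n_def)
  moreover have "g z = g (z - of_int n * T)"
    using periodic_shift_int[of g T "z - of_int n * T" n] assms(1) by simp
  ultimately show ?thesis using that[of "z - of_int n * T"] by (simp add: algebra_simps)
qed

lemma positive_on_interval_by_continuity:
  fixes w :: "real \<Rightarrow> real"
  assumes ab: "a \<le> b" and cw: "continuous_on {a..b} w" and wa: "w a > 0"
    and step: "\<And>t. a \<le> t \<Longrightarrow> t \<le> b \<Longrightarrow> (\<And>r. a \<le> r \<Longrightarrow> r < t \<Longrightarrow> w r > 0) \<Longrightarrow> w t > 0"
  shows "\<forall>t\<in>{a..b}. w t > 0"
proof (rule ccontr)
  assume "\<not> (\<forall>t\<in>{a..b}. w t > 0)"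
  then have ne: "{t\<in>{a..b}. w t \<le> 0} \<noteq> {}" by auto
  have "closed {t\<in>{a..b}. w t \<le> 0}"
    using continuous_closed_preimage[OF cw closed_atLeastAtMost[of a b], of "{..0}"]
    by (simp add: vimage_def Int_def conj_commute)
  then have inS: "Inf {t\<in>{a..b}. w t \<le> 0} \<in> {t\<in>{a..b}. w t \<le> 0}"
    by (rule closed_contains_Inf[OF ne, rotated]) (auto simp: bdd_below_def)
  have "w r > 0" if "a \<le> r" "r < Inf {t\<in>{a..b}. w t \<le> 0}" for r
    using that inS cInf_lower[of r "{t\<in>{a..b}. w t \<le> 0}"] by (force simp: bdd_below_def)
  then show False using step inS by force
qed

lemma ge_level_by_upcrossings:
  fixes \<phi> :: "real \<Rightarrow> real"
  assumes cont: "continuous_on {a..b} \<phi>" and start: "\<phi> a \<ge> c"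
    and up: "\<And>s. s \<in> {a..b} \<Longrightarrow> \<phi> s = c \<Longrightarrow> \<exists>d>0. \<forall>t\<in>{a..b}. s < t \<and> t < s + d \<longrightarrow> \<phi> t > c"
    and t: "t \<in> {a..b}"
  shows "\<phi> t \<ge> c"
proof (rule ccontr)
  assume "\<not> \<phi> t \<ge> c"
  then have below: "\<phi> t < c" by simp
  define S where "S = {r\<in>{a..t}. \<phi> r \<ge> c}"
  have "closed S" unfolding S_def
    using continuous_closed_preimage[OF continuous_on_subset[OF cont] closed_atLeastAtMost[of a t],
        of "{c..}"] t by (auto simp: vimage_def Int_def conj_commute)
  moreover have "a \<in> S" and bdd: "bdd_above S" using start t by (auto simp: S_def bdd_above_def)
  ultimately have s: "Sup S \<in> S" by (intro closed_contains_Sup) auto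
  have after: "\<phi> r < c" if "Sup S < r" "r \<le> t" for r
  proof (rule ccontr)
    assume "\<not> \<phi> r < c"
    then have "r \<in> S" using that s by (auto simp: S_def)
    then show False using cSup_upper[OF _ bdd] that(1) by fastforce
  qed
  have "Sup S \<le> t" "Sup S \<noteq> t" using s below by (auto simp: S_def)
  then have "Sup S < t" by simp
  obtain r where r: "Sup S \<le> r" "r \<le> t" "\<phi> r = c"
    using IVT2'[of \<phi> t c "Sup S"] s below continuous_on_subset[OF cont, of "{Sup S..t}"] t
    by (auto simp: S_def)
  have "r = Sup S"
  proof (rule ccontr)
    assume "r \<noteq> Sup S"
    then show False using after[of r] r by simp
  qed
  with r s t obtain d where d: "d > 0" "\<forall>t'\<in>{a..b}. Sup S < t' \<and> t' < Sup S + d \<longrightarrow> \<phi> t' > c"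
    using up[of "Sup S"] by (auto simp: S_def)
  define r' where "r' = min t (Sup S + d / 2)"
  have "Sup S < r'" "r' \<le> t" "r' < Sup S + d" "r' \<in> {a..b}"
    using \<open>Sup S < t\<close> d(1) s t by (auto simp: r'_def S_def)
  then have "\<phi> r' > c" using d(2) by blast
  with after[OF \<open>Sup S < r'\<close> \<open>r' \<le> t\<close>] show False by simp
qed

lemma gt_level_by_upcrossings:
  fixes \<phi> :: "real \<Rightarrow> real"
  assumes cont: "continuous_on {a..b} \<phi>" and start: "\<phi> a \<ge> c"
    and cross: "\<And>s. s \<in> {a..b} \<Longrightarrow> \<phi> s = c \<Longrightarrow> \<exists>d>0.
       (\<forall>t\<in>{a..b}. s < t \<and> t < s + d \<longrightarrow> \<phi> t > c) \<and> (\<forall>t\<in>{a..b}. s - d < t \<and> t < s \<longrightarrow> \<phi> t < c)"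
    and t: "t \<in> {a<..b}"
  shows "\<phi> t > c"
proof (rule ccontr)
  have not_below: "\<phi> r \<ge> c" if "r \<in> {a..b}" for r
    by (rule ge_level_by_upcrossings[OF cont start _ that]) (use cross in blast)
  assume "\<not> \<phi> t > c"
  with not_below[of t] t have "\<phi> t = c" by auto
  moreover have "t \<in> {a..b}" using t by simp
  ultimately obtain d where d: "d > 0" "\<forall>t'\<in>{a..b}. t - d < t' \<and> t' < t \<longrightarrow> \<phi> t' < c"
    using cross[of t] by blast
  define r where "r = max ((a + t) / 2) (t - d / 2)"
  have "a < r" "r < t" "t - d < r" using t d by (auto simp: r_def less_max_iff_disj)
  then show False using not_below[of r] d t by auto
qed

lemma sin_pos_imp_pos: "\<bar>x\<bar> < pi \<Longrightarrow> sin x > 0 \<Longrightarrow> x > 0"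
  using sin_ge_zero[of "- x"] by force

lemma sin_neg_imp_neg: "\<bar>x\<bar> < pi \<Longrightarrow> sin x < 0 \<Longrightarrow> x < 0"
  using sin_pos_imp_pos[of "- x"] by simp

lemma sin_gap:
  assumes "sin x = 0" "sin y = 0" "x < y"
  shows "x + pi \<le> y"
proof -
  obtain i j :: int where "x = of_int i * pi" "y = of_int j * pi"
    using assms(1,2) unfolding sin_zero_iff_int2 by blast
  moreover from this assms(3) have "i + 1 \<le> j" by simp
  then have "real_of_int i + 1 \<le> real_of_int j" by linarith
  ultimately show ?thesis using mult_right_mono[of "real_of_int i + 1" "real_of_int j" pi] by (simp add: algebra_simps)
qed

lemma unimodular_2x2_eigenvector:
  fixes U V U' V' \<kappa> :: real
  assumes W: "U * V' - U' * V = 1" and ch: "\<kappa> * \<kappa> - (U + V') * \<kappa> + 1 = 0"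
  shows "\<exists>A B. (A \<noteq> 0 \<or> B \<noteq> 0) \<and> U * A + V * B = \<kappa> * A \<and> U' * A + V' * B = \<kappa> * B"
proof (cases "V \<noteq> 0 \<or> \<kappa> \<noteq> U")
  case True
  then show ?thesis
    using W ch by (intro exI[of _ V] exI[of _ "\<kappa> - U"]) (auto simp: algebra_simps)
next
  case False
  then show ?thesis
  proof (cases "\<kappa> - V' \<noteq> 0 \<or> U' \<noteq> 0")
    case True
    then show ?thesis
      using W ch False by (intro exI[of _ "\<kappa> - V'"] exI[of _ U']) (auto simp: algebra_simps)
  qed (intro exI[of _ 1] exI[of _ 0], simp)
qed

section \<open>The Hill equation\<close>

definition solves_hill :: "(real \<Rightarrow> real) \<Rightarrow> (real \<Rightarrow> real) \<Rightarrow> (real \<Rightarrow> real) \<Rightarrow> bool" where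
  "solves_hill Q x y \<longleftrightarrow>
     (\<forall>z. (x has_real_derivative y z) (at z) \<and> (y has_real_derivative Q z * x z) (at z))"

fun picard_iterate ::
  "(real \<Rightarrow> real) \<Rightarrow> real \<Rightarrow> real \<Rightarrow> real \<Rightarrow> nat \<Rightarrow> (real \<Rightarrow> real) \<times> (real \<Rightarrow> real)" where
  "picard_iterate Q a \<xi> \<eta> 0 = (\<lambda>_. \<xi>, \<lambda>_. \<eta>)"
| "picard_iterate Q a \<xi> \<eta> (Suc n) =
     (antiderivative a (snd (picard_iterate Q a \<xi> \<eta> n)),
      antiderivative a (\<lambda>s. Q s * fst (picard_iterate Q a \<xi> \<eta> n) s))"

lemma picard_iterate_bounds:
  fixes \<xi> \<eta> :: real
  assumes cQ: "continuous_on UNIV Q" and K: "K \<ge> 1" and bQ: "\<And>z. \<bar>Q z\<bar> \<le> K"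
  defines "M \<equiv> \<bar>\<xi>\<bar> + \<bar>\<eta>\<bar>"
  shows "continuous_on UNIV (fst (picard_iterate Q a \<xi> \<eta> n)) \<and>
         continuous_on UNIV (snd (picard_iterate Q a \<xi> \<eta> n)) \<and>
         (\<forall>z. \<bar>fst (picard_iterate Q a \<xi> \<eta> n) z\<bar> \<le> M * (K * \<bar>z - a\<bar>)^n / fact n) \<and>
         (\<forall>z. \<bar>snd (picard_iterate Q a \<xi> \<eta> n) z\<bar> \<le> M * (K * \<bar>z - a\<bar>)^n / fact n)"
proof (induction n)
  case 0
  then show ?case by (auto simp: M_def)
next
  case (Suc n)
  define X where "X = fst (picard_iterate Q a \<xi> \<eta> n)"
  define Y where "Y = snd (picard_iterate Q a \<xi> \<eta> n)"
  define B where "B s = M * (K * \<bar>s - a\<bar>)^n / fact n" for s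
  have cX: "continuous_on UNIV X" and cY: "continuous_on UNIV Y"
    and bX: "\<And>s. \<bar>X s\<bar> \<le> B s" and bY: "\<And>s. \<bar>Y s\<bar> \<le> B s"
    using Suc by (auto simp: X_def Y_def B_def)
  have cQX: "continuous_on UNIV (\<lambda>s. Q s * X s)" using cX cQ by (intro continuous_intros)
  have B: "B s \<ge> 0" for s using K by (simp add: B_def M_def)
  have integrate: "\<bar>G z\<bar> \<le> M * (K * \<bar>z - a\<bar>)^(Suc n) / fact (Suc n)"
    if "G a = 0" "\<And>s. (G has_real_derivative g s) (at s)" "\<And>s. \<bar>g s\<bar> \<le> K * B s" for G g z
  proof -
    have "\<bar>g s\<bar> \<le> (M * K^n / fact n * K) * \<bar>s - a\<bar>^n" for s
      using that(3)[of s] by (simp add: B_def power_mult_distrib algebra_simps)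
    from antiderivative_power_bound[OF that(1,2) this, of z]
    show ?thesis by (simp add: power_mult_distrib field_simps)
  qed
  have "\<bar>antiderivative a Y z\<bar> \<le> M * (K * \<bar>z - a\<bar>)^(Suc n) / fact (Suc n)" for z
  proof (rule integrate[OF antiderivative[OF cY]])
    show "\<bar>Y s\<bar> \<le> K * B s" for s using bY[of s] B[of s] K by (smt (verit) mult_le_cancel_right1)
  qed
  moreover have "\<bar>antiderivative a (\<lambda>s. Q s * X s) z\<bar> \<le> M * (K * \<bar>z - a\<bar>)^(Suc n) / fact (Suc n)" for z
  proof (rule integrate[OF antiderivative[OF cQX]])
    show "\<bar>Q s * X s\<bar> \<le> K * B s" for s
      unfolding abs_mult using bQ[of s] bX[of s] K by (intro mult_mono) auto
  qed
  moreover have "continuous_on UNIV (antiderivative a Y)"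
    and "continuous_on UNIV (antiderivative a (\<lambda>s. Q s * X s))"
    by (rule DERIV_imp_continuous_on, rule antiderivative[OF cY])
       (rule DERIV_imp_continuous_on, rule antiderivative[OF cQX])
  ultimately show ?case by (simp add: X_def Y_def)
qed

lemma solves_hill_exists:
  assumes cQ: "continuous_on UNIV Q" and bQ: "\<And>z. \<bar>Q z\<bar> \<le> K"
  shows "\<exists>x y. solves_hill Q x y \<and> x a = \<xi> \<and> y a = \<eta>"
proof -
  define K' where "K' = max 1 K"
  have K': "K' \<ge> 1" "\<And>z. \<bar>Q z\<bar> \<le> K'" using bQ by (auto simp: K'_def le_max_iff_disj)
  define M where "M = \<bar>\<xi>\<bar> + \<bar>\<eta>\<bar>"
  define X where "X n = fst (picard_iterate Q a \<xi> \<eta> n)" for n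
  define Y where "Y n = snd (picard_iterate Q a \<xi> \<eta> n)" for n
  note bounds = picard_iterate_bounds[OF cQ K', of a \<xi> \<eta>]
  have cX: "continuous_on UNIV (X n)" and cY: "continuous_on UNIV (Y n)"
    and bX: "\<bar>X n s\<bar> \<le> M * (K' * \<bar>s - a\<bar>)^n / fact n"
    and bY: "\<bar>Y n s\<bar> \<le> M * (K' * \<bar>s - a\<bar>)^n / fact n" for n s
    using bounds by (auto simp: X_def Y_def M_def)
  have cQX: "continuous_on UNIV (\<lambda>s. Q s * X n s)" for n
    using cX cQ by (intro continuous_intros)
  have dX: "(X (Suc n) has_real_derivative Y n z) (at z)"
    and dY: "(Y (Suc n) has_real_derivative Q z * X n z) (at z)" for n z
    using antiderivative(2)[OF cY[of n]] antiderivative(2)[OF cQX[of n]] by (simp_all add: X_def Y_def)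
  have KM: "M \<ge> 0" "K' * M \<ge> 0" "K' \<ge> 0" using K' by (auto simp: M_def)
  have bQX: "\<bar>Q s * X n s\<bar> \<le> (K' * M) * (K' * \<bar>s - a\<bar>)^n / fact n" for n s
  proof -
    have "\<bar>Q s\<bar> * \<bar>X n s\<bar> \<le> K' * (M * (K' * \<bar>s - a\<bar>)^n / fact n)"
      using K'(2)[of s] bX[of n s] K' by (intro mult_mono) auto
    then show ?thesis by (simp add: abs_mult)
  qed
  define x where "x z = (\<Sum>n. X n z)" for z
  define y where "y z = (\<Sum>n. Y n z)" for z
  have dx: "(x has_real_derivative y z) (at z)" for z
    unfolding x_def y_def
    by (rule DERIV_series_exp_majorant[OF _ dX bX bY KM(3,1)]) (simp add: X_def)
  have dy: "(y has_real_derivative Q z * x z) (at z)" for z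
  proof -
    have "(y has_real_derivative (\<Sum>n. Q z * X n z)) (at z)"
      unfolding y_def
      by (rule DERIV_series_exp_majorant[OF _ dY bY bQX KM(3,2)]) (simp add: Y_def)
    moreover have "summable (\<lambda>n. X n z)"
      by (rule summable_comparison_test[OF _ summable_exp_majorant[of M "K' * \<bar>z - a\<bar>"]])
         (use bX in auto)
    then have "(\<Sum>n. Q z * X n z) = Q z * x z" unfolding x_def by (rule suminf_mult)
    ultimately show ?thesis by simp
  qed
  have X0: "X n a = (if n = 0 then \<xi> else 0)" and Y0: "Y n a = (if n = 0 then \<eta> else 0)" for n
    using bX[of n a] bY[of n a] by (cases n, auto simp: X_def Y_def)+
  have single: "(\<Sum>n. if n = (0::nat) then w else 0) = (w::real)" for w
    using sums_single[of 0 "\<lambda>_. w"] by (simp add: sums_iff)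
  have "x a = \<xi>" "y a = \<eta>" unfolding x_def y_def X0 Y0 single by simp_all
  moreover have "solves_hill Q x y" unfolding solves_hill_def using dx dy by blast
  ultimately show ?thesis by blast
qed

lemma solves_hill_diff_bound_forward:
  assumes h1: "solves_hill Q1 x1 y1" and h2: "solves_hill Q2 x2 y2"
    and K: "K \<ge> 0" and bQ: "\<And>s. \<bar>Q1 s\<bar> \<le> K" and ab: "a \<le> b" and \<beta>: "\<beta> \<ge> 0"
    and bd: "\<And>s. a \<le> s \<Longrightarrow> s \<le> b \<Longrightarrow> \<bar>(Q1 s - Q2 s) * x2 s\<bar> \<le> \<beta>"
  shows "(x1 b - x2 b)^2 + (y1 b - y2 b)^2
           \<le> ((x1 a - x2 a)^2 + (y1 a - y2 a)^2 + \<beta>^2 * (b - a)) * exp ((2 + K) * (b - a))"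
proof -
  define e where "e s = (x1 s - x2 s)^2 + (y1 s - y2 s)^2" for s
  define e' where "e' s = 2 * (x1 s - x2 s) * (y1 s - y2 s)
                          + 2 * (y1 s - y2 s) * (Q1 s * x1 s - Q2 s * x2 s)" for s
  have de: "(e has_real_derivative e' s) (at s)" for s
    using h1 h2 unfolding e_def e'_def solves_hill_def
    by (auto intro!: derivative_eq_intros simp: algebra_simps)
  have "e' s \<le> (2 + K) * e s + \<beta>^2" if "a \<le> s" "s \<le> b" for s
  proof -
    define d where "d = x1 s - x2 s"
    define f where "f = y1 s - y2 s"
    define r where "r = (Q1 s - Q2 s) * x2 s"
    have e': "e' s = 2 * d * f + Q1 s * (2 * f * d) + 2 * f * r"
      unfolding e'_def d_def f_def r_def by (simp add: algebra_simps)
    have "2 * d * f \<le> d^2 + f^2" and "\<bar>2 * f * d\<bar> \<le> d^2 + f^2"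
      using zero_le_power2[of "d - f"] zero_le_power2[of "\<bar>d\<bar> - \<bar>f\<bar>"]
      by (auto simp: power2_eq_square algebra_simps abs_mult)
    moreover have "Q1 s * (2 * f * d) \<le> K * (d^2 + f^2)"
      using mult_mono[OF bQ[of s] \<open>\<bar>2 * f * d\<bar> \<le> d^2 + f^2\<close>] K
      by (smt (verit) abs_ge_zero abs_mult abs_le_iff)
    moreover have "r^2 \<le> \<beta>^2"
      using power_mono[OF bd[OF that] abs_ge_zero, of 2] by (simp add: r_def)
    then have "2 * f * r \<le> f^2 + \<beta>^2" using zero_le_power2[of "f - r"] unfolding power2_diff by linarith
    moreover have "(2 + K) * (d^2 + f^2) = 2 * (d^2 + f^2) + K * (d^2 + f^2)"
      by (simp add: algebra_simps)
    moreover have es: "e s = d^2 + f^2" by (simp add: e_def d_def f_def)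
    ultimately show ?thesis unfolding e' es using zero_le_power2[of d] by (smt (verit))
  qed
  then have "e b \<le> (e a + \<beta>^2 * (b - a)) * exp ((2 + K) * (b - a))"
    using gronwall_affine[OF ab _ _ de] K by simp
  then show ?thesis by (simp add: e_def)
qed

lemma solves_hill_reflect:
  assumes "solves_hill Q x y"
  shows "solves_hill (\<lambda>z. Q (2 * a - z)) (\<lambda>z. x (2 * a - z)) (\<lambda>z. - y (2 * a - z))"
  unfolding solves_hill_def
proof
  fix z
  have "(x has_real_derivative y (2 * a - z)) (at (2 * a - z))"
    and "(y has_real_derivative Q (2 * a - z) * x (2 * a - z)) (at (2 * a - z))"
    using assms unfolding solves_hill_def by auto
  moreover have "((\<lambda>z. 2 * a - z) has_real_derivative -1) (at z)" by (auto intro!: derivative_eq_intros)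
  ultimately show "((\<lambda>z. x (2 * a - z)) has_real_derivative - y (2 * a - z)) (at z) \<and>
      ((\<lambda>z. - y (2 * a - z)) has_real_derivative Q (2 * a - z) * x (2 * a - z)) (at z)"
    using DERIV_chain2 DERIV_minus by fastforce
qed

lemma solves_hill_diff_bound:
  assumes h1: "solves_hill Q1 x1 y1" and h2: "solves_hill Q2 x2 y2"
    and K: "K \<ge> 0" and bQ: "\<And>s. \<bar>Q1 s\<bar> \<le> K" and \<beta>: "\<beta> \<ge> 0"
    and bd: "\<And>s. \<bar>s - a\<bar> \<le> \<bar>b - a\<bar> \<Longrightarrow> \<bar>(Q1 s - Q2 s) * x2 s\<bar> \<le> \<beta>"
  shows "(x1 b - x2 b)^2 + (y1 b - y2 b)^2
           \<le> ((x1 a - x2 a)^2 + (y1 a - y2 a)^2 + \<beta>^2 * \<bar>b - a\<bar>) * exp ((2 + K) * \<bar>b - a\<bar>)"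
proof (cases "a \<le> b")
  case True
  then show ?thesis using solves_hill_diff_bound_forward[OF h1 h2 K bQ True \<beta>] bd by simp
next
  case False
  have "(x1 (2*a - (2*a-b)) - x2 (2*a - (2*a-b)))^2 + (- y1 (2*a - (2*a-b)) - - y2 (2*a - (2*a-b)))^2
     \<le> ((x1 (2*a-a) - x2 (2*a-a))^2 + (- y1 (2*a-a) - - y2 (2*a-a))^2 + \<beta>^2 * ((2*a-b) - a))
        * exp ((2 + K) * ((2*a-b) - a))"
    by (rule solves_hill_diff_bound_forward[OF solves_hill_reflect[OF h1] solves_hill_reflect[OF h2] K
          _ _ \<beta>]) (use bQ False bd in auto)
  then show ?thesis using False by (simp add: power2_commute algebra_simps)
qed

lemma solves_hill_zero: "solves_hill Q (\<lambda>_. 0) (\<lambda>_. 0)"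
  unfolding solves_hill_def by auto

lemma solves_hill_unique:
  assumes h1: "solves_hill Q x1 y1" and h2: "solves_hill Q x2 y2" and bQ: "\<And>s. \<bar>Q s\<bar> \<le> K"
    and "x1 a = x2 a" "y1 a = y2 a"
  shows "x1 z = x2 z \<and> y1 z = y2 z"
proof -
  have "K \<ge> 0" using bQ[of 0] by (meson abs_ge_zero order_trans)
  then have "(x1 z - x2 z)^2 + (y1 z - y2 z)^2 \<le> 0"
    using solves_hill_diff_bound[OF h1 h2 _ bQ order.refl, of a z] assms by simp
  then show ?thesis by (smt (verit) sum_power2_ge_zero sum_power2_eq_zero_iff)
qed

lemma solves_hill_nonvanishing:
  assumes "solves_hill Q x y" "\<And>s. \<bar>Q s\<bar> \<le> K" "x a \<noteq> 0 \<or> y a \<noteq> 0"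
  shows "x z \<noteq> 0 \<or> y z \<noteq> 0"
  using solves_hill_unique[OF assms(1) solves_hill_zero assms(2), of z a] assms(3) by auto

lemma solves_hill_growth:
  assumes h: "solves_hill Q x y" and bQ: "\<And>s. \<bar>Q s\<bar> \<le> K"
  shows "(x z)^2 + (y z)^2 \<le> ((x a)^2 + (y a)^2) * exp ((2 + K) * \<bar>z - a\<bar>)"
  using solves_hill_diff_bound[OF h solves_hill_zero _ bQ order.refl, of a z]
    bQ[of 0] abs_ge_zero[of "Q 0"] by simp

lemma solves_hill_bounded_on_cball:
  assumes h: "solves_hill Q x y" and bQ: "\<And>s. \<bar>Q s\<bar> \<le> K" and z: "\<bar>z - a\<bar> \<le> R"
  shows "\<bar>x z\<bar> \<le> 1 + ((x a)^2 + (y a)^2) * exp ((2 + K) * R)"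
    and "\<bar>y z\<bar> \<le> 1 + ((x a)^2 + (y a)^2) * exp ((2 + K) * R)"
proof -
  have "(x z)^2 + (y z)^2 \<le> ((x a)^2 + (y a)^2) * exp ((2 + K) * R)"
    using solves_hill_growth[OF h bQ, of z a] z bQ[of 0]
    by (smt (verit) exp_le_cancel_iff mult_left_mono mult_right_mono sum_power2_ge_zero)
  moreover have "\<bar>w\<bar> \<le> 1 + w^2" for w :: real
    using zero_le_power2[of "\<bar>w\<bar> - 1/2"] by (simp add: power2_eq_square algebra_simps)
  ultimately show "\<bar>x z\<bar> \<le> 1 + ((x a)^2 + (y a)^2) * exp ((2 + K) * R)"
    and "\<bar>y z\<bar> \<le> 1 + ((x a)^2 + (y a)^2) * exp ((2 + K) * R)"
    by (smt (verit) zero_le_power2)+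
qed

lemma solves_hill_lincomb:
  assumes "solves_hill Q x1 y1" "solves_hill Q x2 y2"
  shows "solves_hill Q (\<lambda>z. A * x1 z + B * x2 z) (\<lambda>z. A * y1 z + B * y2 z)"
  using assms unfolding solves_hill_def by (auto intro!: derivative_eq_intros simp: algebra_simps)

lemma solves_hill_shift:
  assumes "\<And>z. Q (z + T) = Q z" and "solves_hill Q x y"
  shows "solves_hill Q (\<lambda>z. x (z + T)) (\<lambda>z. y (z + T))"
  unfolding solves_hill_def
proof
  fix z
  have "(x has_real_derivative y (z + T)) (at (z + T))"
    and "(y has_real_derivative Q (z + T) * x (z + T)) (at (z + T))"
    using assms(2) unfolding solves_hill_def by auto
  then show "((\<lambda>z. x (z + T)) has_real_derivative y (z + T)) (at z) \<and>
      ((\<lambda>z. y (z + T)) has_real_derivative Q z * x (z + T)) (at z)"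
    using assms(1)[of z] by (simp add: DERIV_shift)
qed

lemma solves_hill_wronskian:
  assumes "solves_hill Q x1 y1" "solves_hill Q x2 y2"
  shows "x1 z * y2 z - y1 z * x2 z = x1 a * y2 a - y1 a * x2 a"
proof -
  have "((\<lambda>z. x1 z * y2 z - y1 z * x2 z) has_real_derivative 0) (at s)" for s
  proof -
    have "((\<lambda>z. x1 z * y2 z - y1 z * x2 z) has_real_derivative
        y1 s * y2 s + x1 s * (Q s * x2 s) - (Q s * x1 s * x2 s + y1 s * y2 s)) (at s)"
      using assms unfolding solves_hill_def by (auto intro!: derivative_eq_intros)
    then show ?thesis by (simp add: algebra_simps)
  qed
  then show ?thesis using DERIV_isconst_all by blast
qed

lemma solves_hill_slope_ge_one:
  assumes h: "solves_hill Q x y" and Q: "\<And>s. a \<le> s \<Longrightarrow> s \<le> b \<Longrightarrow> Q s \<ge> 0"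
    and init: "x a = 0" "y a = 1" and t: "a \<le> t" "t \<le> b"
  shows "y t \<ge> 1"
proof -
  have dx: "(x has_real_derivative y s) (at s)" and dy: "(y has_real_derivative Q s * x s) (at s)" for s
    using h unfolding solves_hill_def by auto
  have step: "y t \<ge> 1" if t: "a \<le> t" "t \<le> b" and pos: "\<And>r. a \<le> r \<Longrightarrow> r < t \<Longrightarrow> y r > 0" for t
  proof -
    have x_nonneg: "x r \<ge> 0" if r: "a \<le> r" "r \<le> t" for r
    proof -
      have "x a \<le> x r"
      proof (rule DERIV_nonneg_imp_increasing_open[OF r(1) _ DERIV_imp_continuous_on[OF dx]])
        fix s assume "a < s" "s < r"
        then show "\<exists>d. (x has_real_derivative d) (at s) \<and> 0 \<le> d"
          using dx pos[of s] r by (intro exI[of _ "y s"]) auto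
      qed
      then show ?thesis using init by simp
    qed
    have "y a \<le> y t"
    proof (rule DERIV_nonneg_imp_increasing_open[OF t(1) _ DERIV_imp_continuous_on[OF dy]])
      fix s assume "a < s" "s < t"
      then show "\<exists>d. (y has_real_derivative d) (at s) \<and> 0 \<le> d"
        using dy Q[of s] x_nonneg[of s] t by (intro exI[of _ "Q s * x s"]) auto
    qed
    then show ?thesis using init by simp
  qed
  have "\<forall>s\<in>{a..b}. y s > 0"
  proof (rule positive_on_interval_by_continuity)
    show "a \<le> b" using t by simp
    show "continuous_on {a..b} y" by (rule DERIV_imp_continuous_on[OF dy])
    show "y a > 0" using init by simp
    show "y s > 0" if "a \<le> s" "s \<le> b" "\<And>r. a \<le> r \<Longrightarrow> r < s \<Longrightarrow> y r > 0" for s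
      using step[OF that] by simp
  qed
  then show ?thesis using step[OF t] t by simp
qed

lemma solves_hill_ge_cosh:
  assumes h: "solves_hill Q x y" and Q: "\<And>s. a \<le> s \<Longrightarrow> s \<le> b \<Longrightarrow> Q s \<ge> k^2"
    and init: "x a = 1" "y a = 0" and t: "a \<le> t" "t \<le> b"
  shows "x t \<ge> (exp (k * (t - a)) + exp (- (k * (t - a)))) / 2"
proof -
  define \<phi> where "\<phi> z = (exp (k * (z - a)) + exp (- (k * (z - a)))) / 2" for z
  define \<psi> where "\<psi> z = k * (exp (k * (z - a)) - exp (- (k * (z - a)))) / 2" for z
  have d\<phi>: "(\<phi> has_real_derivative \<psi> z) (at z)" and d\<psi>: "(\<psi> has_real_derivative k^2 * \<phi> z) (at z)" for z
    unfolding \<phi>_def \<psi>_def by (auto intro!: derivative_eq_intros simp: field_simps power2_eq_square)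
  have \<phi>_pos: "\<phi> z > 0" for z by (simp add: \<phi>_def add_pos_pos)
  have dx: "(x has_real_derivative y s) (at s)" and dy: "(y has_real_derivative Q s * x s) (at s)" for s
    using h unfolding solves_hill_def by auto
  define W where "W z = y z * \<phi> z - x z * \<psi> z" for z
  have dW: "(W has_real_derivative (Q z - k^2) * x z * \<phi> z) (at z)" for z
  proof -
    have "(W has_real_derivative Q z * x z * \<phi> z + y z * \<psi> z - (y z * \<psi> z + x z * (k^2 * \<phi> z))) (at z)"
      unfolding W_def using dx[of z] dy[of z] d\<phi>[of z] d\<psi>[of z] by (auto intro!: derivative_eq_intros)
    then show ?thesis by (simp add: algebra_simps)
  qed
  have dq: "((\<lambda>z. x z / \<phi> z) has_real_derivative W z / (\<phi> z)^2) (at z)" for z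
    using DERIV_divide[OF dx d\<phi>, of z] \<phi>_pos[of z] by (simp add: W_def power2_eq_square)
  have step: "x t \<ge> \<phi> t" if t: "a \<le> t" "t \<le> b" and pos: "\<And>r. a \<le> r \<Longrightarrow> r < t \<Longrightarrow> x r > 0" for t
  proof -
    have W_nonneg: "W r \<ge> 0" if r: "a \<le> r" "r \<le> t" for r
    proof -
      have "W a \<le> W r"
      proof (rule DERIV_nonneg_imp_increasing_open[OF r(1) _ DERIV_imp_continuous_on[OF dW]])
        fix s assume "a < s" "s < r"
        then have "0 \<le> (Q s - k^2) * x s * \<phi> s"
          using Q[of s] pos[of s] \<phi>_pos[of s] r t by simp
        then show "\<exists>d. (W has_real_derivative d) (at s) \<and> 0 \<le> d" using dW by blast
      qed
      then show ?thesis using init by (simp add: W_def \<psi>_def)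
    qed
    have "x a / \<phi> a \<le> x t / \<phi> t"
    proof (rule DERIV_nonneg_imp_increasing_open[OF t(1) _ DERIV_imp_continuous_on[OF dq]])
      fix s assume "a < s" "s < t"
      then show "\<exists>d. ((\<lambda>z. x z / \<phi> z) has_real_derivative d) (at s) \<and> 0 \<le> d"
        using dq W_nonneg[of s] by (intro exI[of _ "W s / (\<phi> s)^2"]) auto
    qed
    then show ?thesis using init \<phi>_pos[of t] by (simp add: \<phi>_def le_divide_eq)
  qed
  have "\<forall>s\<in>{a..b}. x s > 0"
  proof (rule positive_on_interval_by_continuity)
    show "a \<le> b" using t by simp
    show "continuous_on {a..b} x" by (rule DERIV_imp_continuous_on[OF dx])
    show "x a > 0" using init by simp
    show "x s > 0" if "a \<le> s" "s \<le> b" "\<And>r. a \<le> r \<Longrightarrow> r < s \<Longrightarrow> x r > 0" for s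
      using step[OF that] \<phi>_pos[of s] by simp
  qed
  then show ?thesis using step[OF t] t by (simp add: \<phi>_def)
qed

lemma solves_hill_floquet_solution:
  assumes bQ: "\<And>s. \<bar>Q s\<bar> \<le> K" and per: "\<And>z. Q (z + T) = Q z"
    and u: "solves_hill Q u u'" "u a = 1" "u' a = 0"
    and v: "solves_hill Q v v'" "v a = 0" "v' a = 1"
    and trace: "u (a + T) + v' (a + T) = \<kappa> + 1 / \<kappa>" and \<kappa>: "\<kappa> \<noteq> 0"
  obtains w w' where "solves_hill Q w w'" "w a \<noteq> 0 \<or> w' a \<noteq> 0"
    and "\<And>z. w (z + T) = \<kappa> * w z \<and> w' (z + T) = \<kappa> * w' z"
proof -
  define U V U' V' where "U = u (a + T)" "V = v (a + T)" "U' = u' (a + T)" "V' = v' (a + T)"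
  have "U * V' - U' * V = 1"
    using solves_hill_wronskian[OF u(1) v(1), of "a + T" a] u v by (simp add: U_V_U'_V'_def)
  moreover have "\<kappa> * \<kappa> - (U + V') * \<kappa> + 1 = 0"
    using trace \<kappa> by (simp add: U_V_U'_V'_def field_simps)
  ultimately obtain A B where AB: "A \<noteq> 0 \<or> B \<noteq> 0" "U * A + V * B = \<kappa> * A" "U' * A + V' * B = \<kappa> * B"
    using unimodular_2x2_eigenvector by blast
  define w where "w z = A * u z + B * v z" for z
  define w' where "w' z = A * u' z + B * v' z" for z
  have hw: "solves_hill Q w w'" unfolding w_def w'_def by (rule solves_hill_lincomb[OF u(1) v(1)])
  have w0: "w a = A" "w' a = B" using u v by (simp_all add: w_def w'_def)
  have hd: "solves_hill Q (\<lambda>z. 1 * w (z + T) + (- \<kappa>) * w z) (\<lambda>z. 1 * w' (z + T) + (- \<kappa>) * w' z)"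
    by (rule solves_hill_lincomb[OF solves_hill_shift[OF per hw] hw])
  have "w (a + T) = \<kappa> * w a" "w' (a + T) = \<kappa> * w' a"
    using AB w0 by (simp_all add: w_def w'_def U_V_U'_V'_def algebra_simps)
  then have "w (z + T) = \<kappa> * w z \<and> w' (z + T) = \<kappa> * w' z" for z
    using solves_hill_unique[OF hd solves_hill_zero bQ, of a z] by simp
  with hw AB w0 that show ?thesis by auto
qed

definition hill_sol :: "(real \<Rightarrow> real) \<Rightarrow> real \<Rightarrow> real \<Rightarrow> real \<Rightarrow> (real \<Rightarrow> real) \<times> (real \<Rightarrow> real)" where
  "hill_sol Q a \<xi> \<eta> = (SOME (x, y). solves_hill Q x y \<and> x a = \<xi> \<and> y a = \<eta>)"

lemma hill_sol:
  assumes "continuous_on UNIV Q" "\<And>z. \<bar>Q z\<bar> \<le> K"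
  shows "solves_hill Q (fst (hill_sol Q a \<xi> \<eta>)) (snd (hill_sol Q a \<xi> \<eta>))"
    and "fst (hill_sol Q a \<xi> \<eta>) a = \<xi>" "snd (hill_sol Q a \<xi> \<eta>) a = \<eta>"
proof -
  obtain x y where "solves_hill Q x y \<and> x a = \<xi> \<and> y a = \<eta>"
    using solves_hill_exists[OF assms] by blast
  then have "\<exists>p. case p of (x, y) \<Rightarrow> solves_hill Q x y \<and> x a = \<xi> \<and> y a = \<eta>" by blast
  from someI_ex[OF this]
  show "solves_hill Q (fst (hill_sol Q a \<xi> \<eta>)) (snd (hill_sol Q a \<xi> \<eta>))"
    and "fst (hill_sol Q a \<xi> \<eta>) a = \<xi>" "snd (hill_sol Q a \<xi> \<eta>) a = \<eta>"
    unfolding hill_sol_def by (auto split: prod.splits)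
qed

lemma hill_sol_lipschitz_in_parameter:
  fixes Q :: "real \<Rightarrow> real \<Rightarrow> real" and \<xi> \<eta> K R :: real
  assumes cQ: "\<And>l. l \<in> S \<Longrightarrow> continuous_on UNIV (Q l)"
    and bQ: "\<And>l s. l \<in> S \<Longrightarrow> \<bar>Q l s\<bar> \<le> K"
    and lipQ: "\<And>l m s. l \<in> S \<Longrightarrow> m \<in> S \<Longrightarrow> \<bar>Q l s - Q m s\<bar> \<le> C * \<bar>l - m\<bar>"
    and C: "C \<ge> 0" and R: "R \<ge> 0"
    and l: "l \<in> S" and m: "m \<in> S" and z: "\<bar>z - a\<bar> \<le> R"
  shows "\<bar>fst (hill_sol (Q l) a \<xi> \<eta>) z - fst (hill_sol (Q m) a \<xi> \<eta>) z\<bar>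
           \<le> C * (1 + (\<xi>^2 + \<eta>^2) * exp ((2 + K) * R)) * sqrt (R * exp ((2 + K) * R)) * \<bar>l - m\<bar>"
    and "\<bar>snd (hill_sol (Q l) a \<xi> \<eta>) z - snd (hill_sol (Q m) a \<xi> \<eta>) z\<bar>
           \<le> C * (1 + (\<xi>^2 + \<eta>^2) * exp ((2 + K) * R)) * sqrt (R * exp ((2 + K) * R)) * \<bar>l - m\<bar>"
proof -
  define B where "B = 1 + (\<xi>^2 + \<eta>^2) * exp ((2 + K) * R)"
  define x1 where "x1 = fst (hill_sol (Q l) a \<xi> \<eta>)"
  define y1 where "y1 = snd (hill_sol (Q l) a \<xi> \<eta>)"
  define x2 where "x2 = fst (hill_sol (Q m) a \<xi> \<eta>)"
  define y2 where "y2 = snd (hill_sol (Q m) a \<xi> \<eta>)"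
  note h1 = hill_sol[OF cQ[OF l] bQ[OF l], of a \<xi> \<eta>, folded x1_def y1_def]
  note h2 = hill_sol[OF cQ[OF m] bQ[OF m], of a \<xi> \<eta>, folded x2_def y2_def]
  define \<beta> where "\<beta> = C * \<bar>l - m\<bar> * B"
  have K: "K \<ge> 0" using bQ[OF l, of 0] by (meson abs_ge_zero order_trans)
  have "B \<ge> 0" by (simp add: B_def add_nonneg_nonneg)
  then have \<beta>: "\<beta> \<ge> 0" using C by (simp add: \<beta>_def)
  have "\<bar>(Q l s - Q m s) * x2 s\<bar> \<le> \<beta>" if "\<bar>s - a\<bar> \<le> \<bar>z - a\<bar>" for s
  proof -
    have "\<bar>x2 s\<bar> \<le> B"
      using solves_hill_bounded_on_cball(1)[OF h2(1) bQ[OF m], of s a R] that z h2 by (simp add: B_def)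
    then show ?thesis
      unfolding abs_mult \<beta>_def using lipQ[OF l m, of s] C by (intro mult_mono) auto
  qed
  with solves_hill_diff_bound[OF h1(1) h2(1) K bQ[OF l] \<beta>, of a z]
  have "(x1 z - x2 z)^2 + (y1 z - y2 z)^2 \<le> \<beta>^2 * \<bar>z - a\<bar> * exp ((2 + K) * \<bar>z - a\<bar>)"
    using h1 h2 by simp
  also have "\<dots> \<le> \<beta>^2 * R * exp ((2 + K) * R)"
    using z K by (intro mult_mono mult_left_mono) auto
  also have "\<dots> = (C * B * sqrt (R * exp ((2 + K) * R)) * \<bar>l - m\<bar>)^2"
    using R by (simp add: \<beta>_def power_mult_distrib)
  finally have sq: "(x1 z - x2 z)^2 + (y1 z - y2 z)^2 \<le> (C * B * sqrt (R * exp ((2 + K) * R)) * \<bar>l - m\<bar>)^2" .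
  have "0 \<le> C * B * sqrt (R * exp ((2 + K) * R)) * \<bar>l - m\<bar>"
    using C \<open>B \<ge> 0\<close> R by simp
  moreover have "(x1 z - x2 z)^2 \<le> (C * B * sqrt (R * exp ((2 + K) * R)) * \<bar>l - m\<bar>)^2"
    and "(y1 z - y2 z)^2 \<le> (C * B * sqrt (R * exp ((2 + K) * R)) * \<bar>l - m\<bar>)^2"
    using sq zero_le_power2[of "x1 z - x2 z"] zero_le_power2[of "y1 z - y2 z"] by linarith+
  ultimately show "\<bar>fst (hill_sol (Q l) a \<xi> \<eta>) z - fst (hill_sol (Q m) a \<xi> \<eta>) z\<bar>
           \<le> C * (1 + (\<xi>^2 + \<eta>^2) * exp ((2 + K) * R)) * sqrt (R * exp ((2 + K) * R)) * \<bar>l - m\<bar>"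
    and "\<bar>snd (hill_sol (Q l) a \<xi> \<eta>) z - snd (hill_sol (Q m) a \<xi> \<eta>) z\<bar>
           \<le> C * (1 + (\<xi>^2 + \<eta>^2) * exp ((2 + K) * R)) * sqrt (R * exp ((2 + K) * R)) * \<bar>l - m\<bar>"
    unfolding x1_def[symmetric] y1_def[symmetric] x2_def[symmetric] y2_def[symmetric] B_def[symmetric]
    by (auto intro: power2_le_imp_le simp: power2_abs)
qed

lemma hill_sol_lipschitz_in_point:
  fixes \<xi> \<eta> K R :: real
  assumes cQ: "continuous_on UNIV Q" and bQ: "\<And>s. \<bar>Q s\<bar> \<le> K"
    and z: "\<bar>z - a\<bar> \<le> R" and z': "\<bar>z' - a\<bar> \<le> R"
  shows "\<bar>fst (hill_sol Q a \<xi> \<eta>) z - fst (hill_sol Q a \<xi> \<eta>) z'\<bar>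
           \<le> (1 + K) * (1 + (\<xi>^2 + \<eta>^2) * exp ((2 + K) * R)) * \<bar>z - z'\<bar>"
    and "\<bar>snd (hill_sol Q a \<xi> \<eta>) z - snd (hill_sol Q a \<xi> \<eta>) z'\<bar>
           \<le> (1 + K) * (1 + (\<xi>^2 + \<eta>^2) * exp ((2 + K) * R)) * \<bar>z - z'\<bar>"
proof -
  define B where "B = 1 + (\<xi>^2 + \<eta>^2) * exp ((2 + K) * R)"
  define x where "x = fst (hill_sol Q a \<xi> \<eta>)"
  define y where "y = snd (hill_sol Q a \<xi> \<eta>)"
  note h = hill_sol[OF cQ bQ, of a \<xi> \<eta>, folded x_def y_def]
  have K: "K \<ge> 0" using bQ[of 0] by (meson abs_ge_zero order_trans)
  have B: "B \<ge> 0" by (simp add: B_def add_nonneg_nonneg)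
  have bxy: "\<bar>x s\<bar> \<le> B" "\<bar>y s\<bar> \<le> B" if "min z z' \<le> s" "s \<le> max z z'" for s
  proof -
    have "\<bar>s - a\<bar> \<le> R" using that z z' by (auto simp: abs_le_iff min_def max_def split: if_splits)
    from solves_hill_bounded_on_cball[OF h(1) bQ this] h(2,3)
    show "\<bar>x s\<bar> \<le> B" "\<bar>y s\<bar> \<le> B" by (simp_all add: B_def)
  qed
  have "\<bar>x z - x z'\<bar> \<le> (1 + K) * B * \<bar>z - z'\<bar>"
  proof (rule DERIV_bounded_imp_lipschitz)
    show "(x has_real_derivative y s) (at s)" for s using h(1) by (simp add: solves_hill_def)
    show "\<bar>y s\<bar> \<le> (1 + K) * B" if "min z z' \<le> s" "s \<le> max z z'" for s
      using bxy(2)[OF that] mult_right_mono[of 1 "1 + K" B] K B by linarith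
  qed
  moreover have "\<bar>y z - y z'\<bar> \<le> (1 + K) * B * \<bar>z - z'\<bar>"
  proof (rule DERIV_bounded_imp_lipschitz)
    show "(y has_real_derivative Q s * x s) (at s)" for s using h(1) by (simp add: solves_hill_def)
    show "\<bar>Q s * x s\<bar> \<le> (1 + K) * B" if "min z z' \<le> s" "s \<le> max z z'" for s
    proof -
      have "\<bar>Q s * x s\<bar> \<le> K * B" unfolding abs_mult using bQ[of s] bxy(1)[OF that] K by (intro mult_mono) auto
      then show ?thesis using B by (simp add: algebra_simps)
    qed
  qed
  ultimately show "\<bar>fst (hill_sol Q a \<xi> \<eta>) z - fst (hill_sol Q a \<xi> \<eta>) z'\<bar>
           \<le> (1 + K) * (1 + (\<xi>^2 + \<eta>^2) * exp ((2 + K) * R)) * \<bar>z - z'\<bar>"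
    and "\<bar>snd (hill_sol Q a \<xi> \<eta>) z - snd (hill_sol Q a \<xi> \<eta>) z'\<bar>
           \<le> (1 + K) * (1 + (\<xi>^2 + \<eta>^2) * exp ((2 + K) * R)) * \<bar>z - z'\<bar>"
    by (simp_all add: x_def y_def B_def)
qed

lemma hill_sol_continuous_on_cball_times:
  fixes Q :: "real \<Rightarrow> real \<Rightarrow> real"
  assumes cQ: "\<And>l. l \<in> S \<Longrightarrow> continuous_on UNIV (Q l)"
    and bQ: "\<And>l s. l \<in> S \<Longrightarrow> \<bar>Q l s\<bar> \<le> K"
    and lipQ: "\<And>l m s. l \<in> S \<Longrightarrow> m \<in> S \<Longrightarrow> \<bar>Q l s - Q m s\<bar> \<le> C * \<bar>l - m\<bar>"
    and C: "C \<ge> 0"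
  shows "continuous_on (cball a R \<times> S)
           (\<lambda>(z, l). (fst (hill_sol (Q l) a \<xi> \<eta>) z, snd (hill_sol (Q l) a \<xi> \<eta>) z))"
proof (cases "R \<ge> 0 \<and> S \<noteq> {}")
  case False
  then show ?thesis by auto
next
  case True
  then have K: "K \<ge> 0" using bQ by (meson abs_ge_zero all_not_in_conv order_trans)
  define B where "B = 1 + (\<xi>^2 + \<eta>^2) * exp ((2 + K) * R)"
  define Lz where "Lz = (1 + K) * B"
  define Ll where "Ll = C * B * sqrt (R * exp ((2 + K) * R))"
  have "Lz \<ge> 0" "Ll \<ge> 0" using K C True by (simp_all add: Lz_def Ll_def B_def add_nonneg_nonneg)
  define sol where "sol = (\<lambda>(z, l). (fst (hill_sol (Q l) a \<xi> \<eta>) z, snd (hill_sol (Q l) a \<xi> \<eta>) z))"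
  have "(2 * (Lz + Ll))-lipschitz_on (cball a R \<times> S) sol"
  proof (rule lipschitz_onI)
    fix p q assume "p \<in> cball a R \<times> S" "q \<in> cball a R \<times> S"
    then obtain z l z' m where pq: "p = (z, l)" "q = (z', m)" and zl: "\<bar>z - a\<bar> \<le> R" "\<bar>z' - a\<bar> \<le> R" "l \<in> S" "m \<in> S"
      by (auto simp: dist_real_def abs_minus_commute)
    have "\<bar>z - z'\<bar> \<le> dist p q" "\<bar>l - m\<bar> \<le> dist p q"
      using dist_fst_le[of p q] dist_snd_le[of p q] by (simp_all add: pq dist_real_def)
    then have "Lz * \<bar>z - z'\<bar> \<le> Lz * dist p q" "Ll * \<bar>l - m\<bar> \<le> Ll * dist p q"
      using \<open>Lz \<ge> 0\<close> \<open>Ll \<ge> 0\<close> by (simp_all add: mult_left_mono)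
    then have bound: "Lz * \<bar>z - z'\<bar> + Ll * \<bar>l - m\<bar> \<le> (Lz + Ll) * dist p q"
      by (simp add: distrib_right)
    define x y x' y' where "x = fst (hill_sol (Q l) a \<xi> \<eta>)" "y = snd (hill_sol (Q l) a \<xi> \<eta>)"
      "x' = fst (hill_sol (Q m) a \<xi> \<eta>)" "y' = snd (hill_sol (Q m) a \<xi> \<eta>)"
    have "dist (sol p) (sol q) \<le> \<bar>x z - x' z'\<bar> + \<bar>y z - y' z'\<bar>"
      using sqrt_sum_squares_le_sum_abs[of "x z - x' z'" "y z - y' z'"]
      by (simp add: sol_def pq x_y_x'_y'_def dist_Pair_Pair dist_real_def)
    moreover have "\<bar>x z - x z'\<bar> \<le> Lz * \<bar>z - z'\<bar>" "\<bar>y z - y z'\<bar> \<le> Lz * \<bar>z - z'\<bar>"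
      unfolding x_y_x'_y'_def Lz_def B_def
      using hill_sol_lipschitz_in_point[where Q="Q l" and R=R and a=a] cQ bQ zl by blast+
    moreover have "\<bar>x z' - x' z'\<bar> \<le> Ll * \<bar>l - m\<bar>" "\<bar>y z' - y' z'\<bar> \<le> Ll * \<bar>l - m\<bar>"
      unfolding x_y_x'_y'_def Ll_def B_def
      using hill_sol_lipschitz_in_parameter[where S=S and Q=Q and R=R and a=a and K=K and C=C]
        cQ bQ lipQ C True zl by blast+
    ultimately have "dist (sol p) (sol q) \<le> 2 * (Lz * \<bar>z - z'\<bar> + Ll * \<bar>l - m\<bar>)"
      by (smt (verit))
    also have "\<dots> \<le> 2 * ((Lz + Ll) * dist p q)" by (rule mult_left_mono[OF bound]) simp
    finally show "dist (sol p) (sol q) \<le> 2 * (Lz + Ll) * dist p q" by (simp only: mult.assoc)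
  qed (use \<open>Lz \<ge> 0\<close> \<open>Ll \<ge> 0\<close> in simp)
  then show ?thesis unfolding sol_def by (rule lipschitz_on_continuous_on)
qed

section \<open>The linearized system (P) over the reals\<close>

definition solves_real_P :: "real \<Rightarrow> (real \<Rightarrow> real) \<Rightarrow> real \<Rightarrow> (real \<Rightarrow> real) \<Rightarrow> (real \<Rightarrow> real) \<Rightarrow> bool" where
  "solves_real_P c f l p q \<longleftrightarrow> (\<forall>z. (p has_real_derivative q z) (at z) \<and>
     (q has_real_derivative 2 * c * gam c * l * q z - gam c * (l^2 + cos (f z)) * p z) (at z))"

lemma solves_real_P_imp_solP:
  assumes "solves_real_P c f l p q"
  shows "solP c f (complex_of_real l) (\<lambda>z. complex_of_real (p z))"
  unfolding solP_def
proof (intro exI[of _ "\<lambda>z. complex_of_real (q z)"] allI conjI)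
  fix z
  have dp: "(p has_real_derivative q z) (at z)"
    and dq: "(q has_real_derivative 2 * c * gam c * l * q z - gam c * (l^2 + cos (f z)) * p z) (at z)"
    using assms unfolding solves_real_P_def by auto
  show "((\<lambda>z. complex_of_real (p z)) has_vector_derivative complex_of_real (q z)) (at z)"
    by (rule has_vector_derivative_of_real[OF dp])
  show "((\<lambda>z. complex_of_real (q z)) has_vector_derivative
      2 * of_real c * of_real (gam c) * complex_of_real l * complex_of_real (q z)
      - of_real (gam c) * ((complex_of_real l)^2 + of_real (cos (f z))) * complex_of_real (p z)) (at z)"
    using has_vector_derivative_of_real[OF dq] by simp
qed

lemma periodic_solves_real_P_in_specP:
  assumes sol: "solves_real_P c f l p q" and T: "T > 0" and per: "\<And>z. p (z + T) = p z"
    and nz: "p 0 \<noteq> 0 \<or> q 0 \<noteq> 0"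
  shows "complex_of_real l \<in> specP c f"
proof -
  have dp: "(p has_real_derivative q z) (at z)" for z
    using sol unfolding solves_real_P_def by blast
  have "range (\<lambda>z. complex_of_real (p z)) \<subseteq> (\<lambda>z. complex_of_real (p z)) ` {0..T}"
  proof (rule image_subsetI)
    fix z
    obtain r where "0 \<le> r" "r \<le> T" "p z = p r"
      by (rule periodic_value_in_period[of p T z]) (use per T in auto)
    then show "complex_of_real (p z) \<in> (\<lambda>z. complex_of_real (p z)) ` {0..T}" by force
  qed
  moreover have "compact ((\<lambda>z. complex_of_real (p z)) ` {0..T})"
    by (intro compact_continuous_image continuous_on_of_real DERIV_imp_continuous_on[OF dp] compact_Icc)
  ultimately have "bounded (range (\<lambda>z. complex_of_real (p z)))"
    using compact_imp_bounded bounded_subset by blast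
  moreover have "\<exists>z. complex_of_real (p z) \<noteq> 0"
  proof (rule ccontr)
    assume "\<not> ?thesis"
    then have "p = (\<lambda>_. 0)" by auto
    then have "q 0 = 0" using dp[of 0] DERIV_const[of 0 "at 0"] DERIV_unique by metis
    then show False using nz \<open>p = (\<lambda>_. 0)\<close> by simp
  qed
  ultimately show ?thesis unfolding specP_def using solves_real_P_imp_solP[OF sol] by blast
qed

definition real_mat2 :: "real \<Rightarrow> real \<Rightarrow> real \<Rightarrow> real \<Rightarrow> complex^2^2" where
  "real_mat2 a b c d =
     (\<chi> i j. complex_of_real (if i = 1 then if j = 1 then a else b else if j = 1 then c else d))"

lemma real_mat2_nth:
  "real_mat2 a b c d $ 1 $ 1 = complex_of_real a" "real_mat2 a b c d $ 1 $ 2 = complex_of_real b"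
  "real_mat2 a b c d $ 2 $ 1 = complex_of_real c" "real_mat2 a b c d $ 2 $ 2 = complex_of_real d"
  by (simp_all add: real_mat2_def)

lemma real_mat2_decompose:
  "real_mat2 a b c d = a *\<^sub>R real_mat2 1 0 0 0 + b *\<^sub>R real_mat2 0 1 0 0
     + c *\<^sub>R real_mat2 0 0 1 0 + d *\<^sub>R real_mat2 0 0 0 1"
  by (simp add: vec_eq_iff forall_2 real_mat2_nth complex_eq_iff)

lemma has_vector_derivative_real_mat2:
  assumes "(a has_real_derivative a') (at z)" "(b has_real_derivative b') (at z)"
    and "(c has_real_derivative c') (at z)" "(d has_real_derivative d') (at z)"
  shows "((\<lambda>z. real_mat2 (a z) (b z) (c z) (d z)) has_vector_derivative real_mat2 a' b' c' d') (at z)"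
proof -
  have scale: "((\<lambda>z. g z *\<^sub>R M) has_vector_derivative g' *\<^sub>R M) (at z)"
    if "(g has_real_derivative g') (at z)" for g g' and M :: "complex^2^2"
    using has_vector_derivative_scaleR[OF that has_vector_derivative_const] by simp
  show ?thesis
    unfolding real_mat2_decompose[of "a _"] real_mat2_decompose[of a']
    by (intro has_vector_derivative_add scale assms)
qed

lemma coefP_real: "coefP c f (complex_of_real l) z = real_mat2 0 1 (- gam c * (l^2 + cos (f z))) (2 * c * gam c * l)"
  by (simp add: vec_eq_iff forall_2 coefP_def real_mat2_nth)

lemma real_mat2_mult:
  "real_mat2 a b c d ** real_mat2 a' b' c' d'
     = real_mat2 (a * a' + b * c') (a * b' + b * d') (c * a' + d * c') (c * b' + d * d')"
  by (simp add: vec_eq_iff forall_2 matrix_matrix_mult_def sum_2 real_mat2_nth)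

lemma fund_matrix_of_real_solutions:
  assumes s1: "solves_real_P c f l P1 Q1" and s2: "solves_real_P c f l P2 Q2"
    and init: "P1 0 = 1" "Q1 0 = 0" "P2 0 = 0" "Q2 0 = 1"
  shows "fund_matrix c f (complex_of_real l) (\<lambda>z. real_mat2 (P1 z) (P2 z) (Q1 z) (Q2 z))"
  unfolding fund_matrix_def
proof (intro conjI allI)
  show "real_mat2 (P1 0) (P2 0) (Q1 0) (Q2 0) = mat 1"
    using init by (simp add: vec_eq_iff forall_2 real_mat2_nth mat_def)
  fix z
  show "((\<lambda>z. real_mat2 (P1 z) (P2 z) (Q1 z) (Q2 z)) has_vector_derivative
      coefP c f (complex_of_real l) z ** real_mat2 (P1 z) (P2 z) (Q1 z) (Q2 z)) (at z)"
  proof -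
    let ?g = "- gam c * (l^2 + cos (f z))" and ?h = "2 * c * gam c * l"
    have "((\<lambda>z. real_mat2 (P1 z) (P2 z) (Q1 z) (Q2 z)) has_vector_derivative
        real_mat2 (Q1 z) (Q2 z) (?h * Q1 z + ?g * P1 z) (?h * Q2 z + ?g * P2 z)) (at z)"
      using s1 s2 unfolding solves_real_P_def
      by (intro has_vector_derivative_real_mat2) (auto simp: algebra_simps)
    moreover have "real_mat2 (Q1 z) (Q2 z) (?h * Q1 z + ?g * P1 z) (?h * Q2 z + ?g * P2 z)
        = coefP c f (complex_of_real l) z ** real_mat2 (P1 z) (P2 z) (Q1 z) (Q2 z)"
      unfolding coefP_real real_mat2_mult by (simp add: algebra_simps)
    ultimately show ?thesis by simp
  qed
qed

lemma floquet_multiplier_one_if_fixed_vector: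
  assumes s1: "solves_real_P c f l P1 Q1" and s2: "solves_real_P c f l P2 Q2"
    and init: "P1 0 = 1" "Q1 0 = 0" "P2 0 = 0" "Q2 0 = 1"
    and fixed: "P1 T * x1 + P2 T * x2 = x1" "Q1 T * x1 + Q2 T * x2 = x2" and nz: "x1 \<noteq> 0 \<or> x2 \<noteq> 0"
  shows "floquet_multiplier c f T (complex_of_real l) 1"
proof -
  have "((P1 T - 1) * (Q2 T - 1) - P2 T * Q1 T) * x1
      = (Q2 T - 1) * (P1 T * x1 + P2 T * x2 - x1) - P2 T * (Q1 T * x1 + Q2 T * x2 - x2)"
    and "((P1 T - 1) * (Q2 T - 1) - P2 T * Q1 T) * x2
      = (P1 T - 1) * (Q1 T * x1 + Q2 T * x2 - x2) - Q1 T * (P1 T * x1 + P2 T * x2 - x1)"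
    by (simp_all add: algebra_simps)
  then have "((P1 T - 1) * (Q2 T - 1) - P2 T * Q1 T) * x1 = 0"
    and "((P1 T - 1) * (Q2 T - 1) - P2 T * Q1 T) * x2 = 0"
    using fixed by simp_all
  with nz have "(P1 T - 1) * (Q2 T - 1) - P2 T * Q1 T = 0"
    by (metis mult_eq_0_iff)
  moreover have "det (real_mat2 (P1 T) (P2 T) (Q1 T) (Q2 T) - mat 1)
      = complex_of_real ((P1 T - 1) * (Q2 T - 1) - P2 T * Q1 T)"
    by (simp add: det_2 real_mat2_nth mat_def)
  ultimately have "det (real_mat2 (P1 T) (P2 T) (Q1 T) (Q2 T) - mat 1) = 0" by simp
  then show ?thesis
    unfolding floquet_multiplier_def using fund_matrix_of_real_solutions[OF s1 s2 init] by blast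
qed

section \<open>Subluminal librational waves\<close>

locale librational_wave =
  fixes c E T :: real and f :: "real \<Rightarrow> real"
  assumes librational: "subluminal_librational c f E" and period: "fundamental_period f T"
begin

definition "\<gamma> = gam c"
definition "f1 = deriv f"
definition "f2 = deriv f1"

text \<open>Substituting \<open>p(z) = exp(c\<gamma>\<lambda>z) w(z)\<close> into (P) removes the first-order term and leaves
  the Hill equation \<open>w'' = Q \<lambda> w\<close>.\<close>

definition "Q l z = \<gamma>^2 * l^2 - \<gamma> * cos (f z)"

lemma c_sq_less_1: "c^2 < 1" and E_pos: "0 < E" and E_less_2: "E < 2" and T_pos: "T > 0"
  using librational period by (auto simp: subluminal_librational_def fundamental_period_def)

lemma gamma_neg: "\<gamma> < 0"
  using c_sq_less_1 by (simp add: \<gamma>_def gam_def)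

lemma gamma_mult: "\<gamma> * (c^2 - 1) = 1"
  using c_sq_less_1 by (simp add: \<gamma>_def gam_def)

lemma gamma_le_neg1: "\<gamma> \<le> -1"
proof -
  have "1 \<le> 1 / (1 - c^2)" using c_sq_less_1 zero_le_power2[of c] by (simp add: field_simps)
  moreover have "\<gamma> = - (1 / (1 - c^2))" by (simp add: \<gamma>_def gam_def divide_simps)
  ultimately show ?thesis by simp
qed

lemma DERIV_f: "(f has_real_derivative f1 z) (at z)"
  and DERIV_f1: "(f1 has_real_derivative f2 z) (at z)"
  and wave_ode: "(c^2 - 1) * f2 z + sin (f z) = 0"
  using librational unfolding subluminal_librational_def traveling_wave_def f1_def f2_def
  by (auto simp: DERIV_deriv_iff_real_differentiable)

lemma f2_eq: "f2 z = - \<gamma> * sin (f z)"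
proof -
  have "f2 z = \<gamma> * ((c^2 - 1) * f2 z)" using gamma_mult by (simp add: mult.assoc[symmetric])
  also have "(c^2 - 1) * f2 z = - sin (f z)" using wave_ode[of z] by linarith
  finally show ?thesis by simp
qed

lemma DERIV_f2: "(f2 has_real_derivative - \<gamma> * cos (f z) * f1 z) (at z)"
proof -
  have "f2 = (\<lambda>z. - \<gamma> * sin (f z))" using f2_eq by auto
  then show ?thesis by (auto intro!: derivative_eq_intros DERIV_f)
qed

lemma energy: "(1/2) * (c^2 - 1) * (f1 z)^2 + 1 - cos (f z) = E"
  using librational unfolding subluminal_librational_def wave_energy_def f1_def by auto

lemma cos_f_le: "cos (f z) \<le> 1 - E"
  using energy[of z] c_sq_less_1 mult_nonpos_nonneg[of "(1/2) * (c^2 - 1)" "(f1 z)^2"] by simp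

lemma f1_eq_0_iff: "f1 z = 0 \<longleftrightarrow> cos (f z) = 1 - E"
  using energy[of z] c_sq_less_1 by auto

lemma sin_f_neq_0_if_f1_eq_0:
  assumes "f1 z = 0" shows "sin (f z) \<noteq> 0"
proof
  assume "sin (f z) = 0"
  then have "(1 - E)^2 = 1" using sin_cos_squared_add[of "f z"] assms f1_eq_0_iff by simp
  then have "E * (E - 2) = 0" by (simp add: power2_eq_square algebra_simps)
  then show False using E_pos E_less_2 by simp
qed

text \<open>A librational wave never reaches a multiple of \<open>2\<pi>\<close> (there \<open>cos f = 1 > 1 - E\<close>), so the
  shift by \<open>2\<pi>k\<close> allowed in the definition of the period must vanish.\<close>

lemma f_periodic: "f (z + T) = f z"
proof -
  obtain k :: int where k: "f (z + T) = f z + 2 * pi * k"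
    using period unfolding fundamental_period_def period_mod_2pi_def by blast
  have "k = 0"
  proof (rule ccontr)
    assume "k \<noteq> 0"
    then have "2 * pi \<le> \<bar>f (z + T) - f z\<bar>" using k by (simp add: abs_mult)
    define lo where "lo = min (f z) (f (z + T))"
    define hi where "hi = max (f z) (f (z + T))"
    define m where "m = \<lceil>lo / (2 * pi)\<rceil>"
    have "lo / (2 * pi) \<le> m" "m < lo / (2 * pi) + 1"
      unfolding m_def by (simp, linarith)
    then have "lo \<le> 2 * pi * m" "2 * pi * m < lo + 2 * pi"
      using pi_gt_zero by (simp_all add: field_simps)
    moreover have "lo + 2 * pi \<le> hi"
      using \<open>2 * pi \<le> \<bar>f (z + T) - f z\<bar>\<close> by (auto simp: lo_def hi_def min_def max_def abs_if)
    ultimately have "\<exists>t. z \<le> t \<and> t \<le> z + T \<and> f t = 2 * pi * m"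
      using IVT'[of f z "2 * pi * m" "z + T"] IVT2'[of f "z + T" "2 * pi * m" z]
        DERIV_imp_continuous_on[OF DERIV_f] T_pos
      by (cases "f z \<le> f (z + T)") (auto simp: lo_def hi_def)
    then obtain t where "f t = 2 * pi * m" by blast
    then have "cos (f t) = 1" by simp
    then show False using cos_f_le[of t] E_pos by simp
  qed
  then show ?thesis using k by simp
qed

lemma f1_periodic: "f1 (z + T) = f1 z"
proof -
  have "((\<lambda>s. f (s + T)) has_real_derivative f1 (z + T)) (at z)"
    using DERIV_f[of "z + T"] by (simp add: DERIV_shift)
  then show ?thesis using f_periodic DERIV_unique[OF DERIV_f[of z]] by simp
qed

lemma Q_periodic: "Q l (z + T) = Q l z"
  by (simp add: Q_def f_periodic)

lemma Q_continuous: "continuous_on S (Q l)"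
  unfolding Q_def by (intro continuous_intros DERIV_imp_continuous_on[OF DERIV_f])

lemma Q_bounds: "\<gamma>^2 * l^2 + \<gamma> \<le> Q l z" "Q l z \<le> \<gamma>^2 * l^2 - \<gamma>"
  using mult_left_mono[of "cos (f z)" 1 "- \<gamma>"] mult_left_mono[of "-1" "cos (f z)" "- \<gamma>"] gamma_neg
  by (auto simp: Q_def)

lemma abs_Q_le:
  assumes "\<bar>l\<bar> \<le> \<Lambda>" shows "\<bar>Q l z\<bar> \<le> \<gamma>^2 * \<Lambda>^2 - \<gamma>"
proof -
  have "l^2 \<le> \<Lambda>^2" using power_mono[OF assms abs_ge_zero, of 2] by simp
  then have "\<gamma>^2 * l^2 \<le> \<gamma>^2 * \<Lambda>^2" by (simp add: mult_left_mono)
  moreover have "0 \<le> \<gamma>^2 * l^2" by simp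
  ultimately show ?thesis using Q_bounds[of l z] gamma_neg unfolding abs_le_iff by linarith
qed

lemma solves_hill_Q0: "solves_hill (Q 0) f1 f2"
  unfolding solves_hill_def Q_def using DERIV_f1 DERIV_f2 by (simp add: algebra_simps)

lemma exists_max_turning_point: "\<exists>z0. f1 z0 = 0 \<and> f2 z0 \<noteq> 0 \<and> (\<forall>y. f y \<le> f z0)"
proof -
  obtain z0 where z0: "z0 \<in> {0..T}" "\<forall>y\<in>{0..T}. f y \<le> f z0"
    using continuous_attains_sup[OF compact_Icc _ DERIV_imp_continuous_on[OF DERIV_f], of 0 T] T_pos
    by auto
  have max: "f y \<le> f z0" for y
  proof -
    obtain r where "0 \<le> r" "r \<le> T" "f y = f r"
      by (rule periodic_value_in_period[of f T y]) (use f_periodic T_pos in auto)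
    then show ?thesis using z0 by auto
  qed
  then have "f1 z0 = 0" by (intro DERIV_local_max[OF DERIV_f, of 1]) auto
  moreover have "f2 z0 \<noteq> 0"
    using sin_f_neq_0_if_f1_eq_0[OF \<open>f1 z0 = 0\<close>] f2_eq[of z0] gamma_neg by simp
  ultimately show ?thesis using max by blast
qed

lemma exists_min_turning_point:
  assumes max: "\<And>y. f y \<le> f z0" and f2: "f2 z0 \<noteq> 0"
  shows "\<exists>z1. z0 < z1 \<and> z1 < z0 + T \<and> f1 z1 = 0"
proof -
  have "\<exists>y. f y < f z0"
  proof (rule ccontr)
    assume "\<not> ?thesis"
    then have "f = (\<lambda>_. f z0)" using max by (auto intro: antisym simp: not_less)
    then have "f1 = (\<lambda>_. 0)" using DERIV_unique[OF DERIV_f] by (metis DERIV_const ext)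
    then have "f2 z0 = 0" using DERIV_unique[OF DERIV_f1[of z0]] by (metis DERIV_const)
    with f2 show False by simp
  qed
  obtain z1 where z1: "z1 \<in> {z0..z0 + T}" "\<forall>y\<in>{z0..z0 + T}. f z1 \<le> f y"
    using continuous_attains_inf[OF compact_Icc _ DERIV_imp_continuous_on[OF DERIV_f], of z0 "z0 + T"] T_pos
    by auto
  have min: "f z1 \<le> f y" for y
  proof -
    obtain r where "0 \<le> r" "r \<le> T" "f (z0 + (y - z0)) = f (z0 + r)"
      by (rule periodic_value_in_period[of "\<lambda>s. f (z0 + s)" T "y - z0"])
         (use f_periodic T_pos in \<open>auto simp: add.assoc[symmetric]\<close>)
    then show ?thesis using z1(2)[rule_format, of "z0 + r"] by simp
  qed
  then have "f z1 < f z0" using \<open>\<exists>y. f y < f z0\<close> le_less_trans by blast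
  then have "z1 \<noteq> z0" "z1 \<noteq> z0 + T" using f_periodic[of z0] by auto
  moreover have "f1 z1 = 0" using min by (intro DERIV_local_min[OF DERIV_f, of 1]) auto
  ultimately show ?thesis using z1(1) by (intro exI[of _ z1]) auto
qed

lemma hill_sol_Q:
  "solves_hill (Q l) (fst (hill_sol (Q l) a \<xi> \<eta>)) (snd (hill_sol (Q l) a \<xi> \<eta>))"
  "fst (hill_sol (Q l) a \<xi> \<eta>) a = \<xi>" "snd (hill_sol (Q l) a \<xi> \<eta>) a = \<eta>"
  using hill_sol[OF Q_continuous abs_Q_le[OF order.refl]] by blast+

lemma solves_real_P_of_hill:
  assumes h: "solves_hill (Q l) w w'"
  defines "a \<equiv> c * \<gamma> * l"
  shows "solves_real_P c f l (\<lambda>z. exp (a * z) * w z) (\<lambda>z. exp (a * z) * (w' z + a * w z))"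
  unfolding solves_real_P_def
proof
  fix z
  have dw: "(w has_real_derivative w' z) (at z)" "(w' has_real_derivative Q l z * w z) (at z)"
    using h unfolding solves_hill_def by auto
  have "\<gamma>^2 * l^2 = a^2 - \<gamma> * l^2"
    using gamma_mult unfolding a_def by (simp add: power2_eq_square algebra_simps) algebra
  then have Qa: "Q l z = a^2 - \<gamma> * l^2 - \<gamma> * cos (f z)" by (simp add: Q_def)
  have eq: "a * (w' z + a * w z) + (Q l z * w z + a * w' z)
      = 2 * c * gam c * l * (w' z + a * w z) - gam c * (l^2 + cos (f z)) * w z"
    unfolding Qa by (simp add: a_def \<gamma>_def algebra_simps power2_eq_square)
  have "((\<lambda>z. exp (a * z) * w z) has_real_derivative exp (a * z) * (w' z + a * w z)) (at z)"
    using dw by (auto intro!: derivative_eq_intros simp: algebra_simps)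
  moreover have "((\<lambda>z. exp (a * z) * (w' z + a * w z)) has_real_derivative
      exp (a * z) * (a * (w' z + a * w z) + (Q l z * w z + a * w' z))) (at z)"
    using dw by (auto intro!: derivative_eq_intros simp: algebra_simps)
  moreover have "exp (a * z) * (a * (w' z + a * w z) + (Q l z * w z + a * w' z))
      = 2 * c * gam c * l * (exp (a * z) * (w' z + a * w z)) - gam c * (l^2 + cos (f z)) * (exp (a * z) * w z)"
    unfolding eq by (simp add: algebra_simps)
  ultimately show "((\<lambda>z. exp (a * z) * w z) has_real_derivative exp (a * z) * (w' z + a * w z)) (at z) \<and>
      ((\<lambda>z. exp (a * z) * (w' z + a * w z)) has_real_derivative
        2 * c * gam c * l * (exp (a * z) * (w' z + a * w z)) - gam c * (l^2 + cos (f z)) * (exp (a * z) * w z)) (at z)"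
    by simp
qed

lemma floquet_multiplier_one_of_hill_transform:
  assumes hw: "solves_hill (Q l) w w'"
  defines "a \<equiv> c * \<gamma> * l"
  assumes per: "exp (a * T) * w T = w 0" "exp (a * T) * (w' T + a * w T) = w' 0 + a * w 0"
    and nz: "w 0 \<noteq> 0 \<or> w' 0 \<noteq> 0"
  shows "floquet_multiplier c f T (complex_of_real l) 1"
proof -
  define x1 x2 where "x1 = w 0" "x2 = w' 0 + a * w 0"
  define w1 w1' w2 w2' where "w1 = fst (hill_sol (Q l) 0 1 (- a))" "w1' = snd (hill_sol (Q l) 0 1 (- a))"
    "w2 = fst (hill_sol (Q l) 0 0 1)" "w2' = snd (hill_sol (Q l) 0 0 1)"
  note h1 = hill_sol_Q[of l 0 1 "- a", folded w1_w1'_w2_w2'_def]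
  note h2 = hill_sol_Q[of l 0 0 1, folded w1_w1'_w2_w2'_def]
  have "x1 * w1 0 + x2 * w2 0 = w 0" "x1 * w1' 0 + x2 * w2' 0 = w' 0"
    using h1 h2 by (simp_all add: x1_x2_def)
  then have "w T = x1 * w1 T + x2 * w2 T \<and> w' T = x1 * w1' T + x2 * w2' T"
    using solves_hill_unique[OF hw solves_hill_lincomb[OF h1(1) h2(1), of x1 x2]
        abs_Q_le[OF order.refl], of 0 T] by simp
  then have "exp (a * T) * w1 T * x1 + exp (a * T) * w2 T * x2 = x1"
    and "exp (a * T) * (w1' T + a * w1 T) * x1 + exp (a * T) * (w2' T + a * w2 T) * x2 = x2"
    using per by (simp_all add: x1_x2_def algebra_simps)
  moreover have "exp (a * 0) * w1 0 = 1" "exp (a * 0) * (w1' 0 + a * w1 0) = 0"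
    "exp (a * 0) * w2 0 = 0" "exp (a * 0) * (w2' 0 + a * w2 0) = 1"
    using h1 h2 by simp_all
  moreover have "x1 \<noteq> 0 \<or> x2 \<noteq> 0" using nz by (auto simp: x1_x2_def)
  ultimately show ?thesis
    using floquet_multiplier_one_if_fixed_vector[OF solves_real_P_of_hill[OF h1(1), folded a_def]
        solves_real_P_of_hill[OF h2(1), folded a_def]] by blast
qed

lemma spectral_point_of_hill_floquet_solution:
  assumes hw: "solves_hill (Q l) w w'" and nz: "w b \<noteq> 0 \<or> w' b \<noteq> 0"
    and per: "\<And>z. w (z + T) = exp (- (c * \<gamma> * l * T)) * w z \<and> w' (z + T) = exp (- (c * \<gamma> * l * T)) * w' z"
  shows "complex_of_real l \<in> specP c f" and "floquet_multiplier c f T (complex_of_real l) 1"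
proof -
  define a where "a = c * \<gamma> * l"
  define p where "p z = exp (a * z) * w z" for z
  define q where "q z = exp (a * z) * (w' z + a * w z)" for z
  have shift: "exp (a * (z + T)) * exp (- (a * T)) = exp (a * z)" for z
    by (simp add: algebra_simps flip: exp_add)
  have p_per: "p (z + T) = p z" and q_per: "q (z + T) = q z" for z
  proof -
    have "p (z + T) = (exp (a * (z + T)) * exp (- (a * T))) * w z"
      and "q (z + T) = (exp (a * (z + T)) * exp (- (a * T))) * (w' z + a * w z)"
      using per[of z] by (simp_all add: p_def q_def a_def algebra_simps)
    then show "p (z + T) = p z" "q (z + T) = q z" unfolding shift by (simp_all add: p_def q_def)
  qed
  have nz0: "w 0 \<noteq> 0 \<or> w' 0 \<noteq> 0"
    using solves_hill_nonvanishing[OF hw abs_Q_le[OF order.refl] nz] .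
  then have "p 0 \<noteq> 0 \<or> q 0 \<noteq> 0" by (auto simp: p_def q_def)
  then show "complex_of_real l \<in> specP c f"
    unfolding p_def q_def a_def
    by (intro periodic_solves_real_P_in_specP[OF solves_real_P_of_hill[OF hw] T_pos] p_per[unfolded p_def a_def])
  show "floquet_multiplier c f T (complex_of_real l) 1"
    using floquet_multiplier_one_of_hill_transform[OF hw _ _ nz0] p_per[of 0] q_per[of 0]
    by (simp add: p_def q_def a_def)
qed

end

section \<open>The Pruefer angle between consecutive turning points\<close>

locale wave_turning_points = librational_wave +
  fixes z0 z1 :: real
  assumes f1_z0: "f1 z0 = 0" and f2_z0: "f2 z0 \<noteq> 0"
    and z1: "z0 < z1" "z1 < z0 + T" "f1 z1 = 0"
begin

text \<open>Chosen so that \<open>Q Lmax > 0\<close> and \<open>(-\<gamma> Lmax - 1) T \<ge> \<bar>c\<gamma> Lmax\<bar> T + 2\<close>: then the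
  growth rate \<open>-\<gamma> Lmax - 1\<close> of \<open>u\<close> beats \<open>2 cosh(c\<gamma> Lmax T)\<close>.\<close>

definition "Lmax = 1 + (1 + 2 / T) / ((- \<gamma>) * (1 - \<bar>c\<bar>))"

definition "u l = fst (hill_sol (Q l) z0 1 0)"
definition "u' l = snd (hill_sol (Q l) z0 1 0)"
definition "v l = fst (hill_sol (Q l) z0 0 1)"
definition "v' l = snd (hill_sol (Q l) z0 0 1)"

lemma solves_hill_u: "solves_hill (Q l) (u l) (u' l)" "u l z0 = 1" "u' l z0 = 0"
  using hill_sol_Q[of l z0 1 0] by (simp_all add: u_def u'_def)

lemma solves_hill_v: "solves_hill (Q l) (v l) (v' l)" "v l z0 = 0" "v' l z0 = 1"
  using hill_sol_Q[of l z0 0 1] by (simp_all add: v_def v'_def)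

lemma abs_c_less_1: "\<bar>c\<bar> < 1"
  using c_sq_less_1 abs_square_less_1 by blast

lemma Lmax_gt_1: "Lmax > 1"
proof -
  have "(- \<gamma>) * (1 - \<bar>c\<bar>) > 0" using gamma_neg abs_c_less_1 by (intro mult_pos_pos) auto
  moreover have "1 + 2 / T > 0" using T_pos by (simp add: add_pos_pos)
  ultimately have "(1 + 2 / T) / ((- \<gamma>) * (1 - \<bar>c\<bar>)) > 0" by (rule divide_pos_pos[rotated])
  then show ?thesis unfolding Lmax_def by linarith
qed

lemma Q_lipschitz_in_parameter:
  assumes "l \<in> {0..Lmax}" "m \<in> {0..Lmax}"
  shows "\<bar>Q l s - Q m s\<bar> \<le> 2 * \<gamma>^2 * Lmax * \<bar>l - m\<bar>"
proof -
  have "Q l s - Q m s = \<gamma>^2 * ((l - m) * (l + m))" by (simp add: Q_def power2_eq_square algebra_simps)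
  then have "\<bar>Q l s - Q m s\<bar> = \<gamma>^2 * (\<bar>l - m\<bar> * (l + m))" using assms by (simp add: abs_mult)
  also have "\<dots> \<le> \<gamma>^2 * (\<bar>l - m\<bar> * (2 * Lmax))"
    using assms by (intro mult_left_mono) auto
  finally show ?thesis by (simp add: algebra_simps)
qed

lemma hill_sol_Q_continuous:
  "continuous_on (cball z0 T \<times> {0..Lmax})
     (\<lambda>(z, l). (fst (hill_sol (Q l) z0 \<xi> \<eta>) z, snd (hill_sol (Q l) z0 \<xi> \<eta>) z))"
  by (rule hill_sol_continuous_on_cball_times[OF Q_continuous _ Q_lipschitz_in_parameter])
     (use Lmax_gt_1 in \<open>auto intro: abs_Q_le\<close>)

text \<open>A Pruefer angle of \<open>v\<close>, \<open>(v', v) = \<rho> (cos \<theta>, sin \<theta>)\<close>, continuous jointly in \<open>z\<close> and \<open>\<lambda>\<close>: it comes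
  from a continuous logarithm of the nonvanishing map \<open>v' + i v\<close> on a contractible rectangle.\<close>

definition "rect = cball z0 T \<times> {0..Lmax}"

definition "prufer_log = (SOME G. continuous_on rect G \<and>
   (\<forall>(z, l)\<in>rect. Complex (v' l z) (v l z) = exp (G (z, l))))"

definition "\<theta> z l = Im (prufer_log (z, l))"
definition "\<rho> z l = exp (Re (prufer_log (z, l)))"

lemma prufer_log:
  "continuous_on rect prufer_log" "\<And>z l. (z, l) \<in> rect \<Longrightarrow> Complex (v' l z) (v l z) = exp (prufer_log (z, l))"
proof -
  have "continuous_on rect ((\<lambda>(x, y). Complex y x) \<circ> (\<lambda>(z, l). (v l z, v' l z)))"
    unfolding rect_def v_def v'_def
    by (intro continuous_on_compose hill_sol_Q_continuous)
       (auto intro!: continuous_intros simp: split_beta Complex_eq)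
  moreover have "Complex (v' l z) (v l z) \<noteq> 0" for z l
    using solves_hill_nonvanishing[OF solves_hill_v(1)[of l] abs_Q_le[OF order.refl], of z0 z] solves_hill_v
    by (auto simp: complex_eq_iff)
  moreover have "contractible rect"
    unfolding rect_def by (intro convex_imp_contractible convex_Times convex_cball convex_real_interval)
  ultimately obtain G where "continuous_on rect G" "\<And>p. p \<in> rect \<Longrightarrow> Complex (v' (snd p) (fst p)) (v (snd p) (fst p)) = exp (G p)"
    using continuous_logarithm_on_contractible[of rect "\<lambda>(z, l). Complex (v' l z) (v l z)"]
    by (auto simp: o_def split_beta)
  then have "\<exists>G. continuous_on rect G \<and> (\<forall>(z, l)\<in>rect. Complex (v' l z) (v l z) = exp (G (z, l)))"
    by auto
  from someI_ex[OF this]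
  show "continuous_on rect prufer_log" "\<And>z l. (z, l) \<in> rect \<Longrightarrow> Complex (v' l z) (v l z) = exp (prufer_log (z, l))"
    unfolding prufer_log_def by auto
qed

lemma prufer_polar:
  assumes "z \<in> {z0..z0 + T}" "l \<in> {0..Lmax}"
  shows "v' l z = \<rho> z l * cos (\<theta> z l)" "v l z = \<rho> z l * sin (\<theta> z l)"
proof -
  have "(z, l) \<in> rect" using assms by (auto simp: rect_def dist_real_def)
  from arg_cong[OF prufer_log(2)[OF this], of Re] arg_cong[OF prufer_log(2)[OF this], of Im]
  show "v' l z = \<rho> z l * cos (\<theta> z l)" "v l z = \<rho> z l * sin (\<theta> z l)"
    by (simp_all add: Re_exp Im_exp \<rho>_def \<theta>_def)
qed

lemma \<rho>_pos: "\<rho> z l > 0"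
  by (simp add: \<rho>_def)

lemma \<theta>_continuous_in_point: "l \<in> {0..Lmax} \<Longrightarrow> continuous_on {z0..z0 + T} (\<lambda>z. \<theta> z l)"
  unfolding \<theta>_def
  by (rule continuous_on_compose2[OF continuous_on_Im[OF prufer_log(1)]])
     (auto intro!: continuous_intros simp: rect_def dist_real_def)

lemma \<theta>_continuous_in_parameter: "z \<in> {z0..z0 + T} \<Longrightarrow> continuous_on {0..Lmax} (\<lambda>l. \<theta> z l)"
  unfolding \<theta>_def
  by (rule continuous_on_compose2[OF continuous_on_Im[OF prufer_log(1)]])
     (auto intro!: continuous_intros simp: rect_def dist_real_def)

lemma z0_in: "z0 \<in> {z0..z0 + T}" "z0 + T \<in> {z0..z0 + T}"
  using T_pos by auto

lemma cos_\<theta>_start: "l \<in> {0..Lmax} \<Longrightarrow> cos (\<theta> z0 l) = 1"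
  using prufer_polar[OF z0_in(1)] solves_hill_v[of l] \<rho>_pos[of z0 l] sin_cos_squared_add[of "\<theta> z0 l"]
  by (auto simp: power2_eq_1_iff zero_less_mult_iff)

lemma \<theta>_start:
  assumes "l \<in> {0..Lmax}" shows "\<theta> z0 l = \<theta> z0 0"
proof -
  have "(\<lambda>l. \<theta> z0 l) constant_on {0..Lmax}"
  proof (rule continuous_discrete_range_constant[OF connected_Icc \<theta>_continuous_in_parameter[OF z0_in(1)]])
    fix m assume m: "m \<in> {0..Lmax}"
    obtain j :: int where j: "\<theta> z0 m = real_of_int j * 2 * pi"
      using cos_\<theta>_start[OF m] unfolding cos_one_2pi_int by blast
    show "\<exists>e>0. \<forall>n. n \<in> {0..Lmax} \<and> \<theta> z0 n \<noteq> \<theta> z0 m \<longrightarrow> e \<le> norm (\<theta> z0 n - \<theta> z0 m)"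
    proof (intro exI[of _ "2 * pi"] conjI allI impI)
      fix n assume n: "n \<in> {0..Lmax} \<and> \<theta> z0 n \<noteq> \<theta> z0 m"
      obtain i :: int where i: "\<theta> z0 n = real_of_int i * 2 * pi"
        using cos_\<theta>_start[of n] n unfolding cos_one_2pi_int by blast
      have "i \<noteq> j" using n i j by auto
      then have "1 \<le> \<bar>real_of_int (i - j)\<bar>" by linarith
      moreover have "\<theta> z0 n - \<theta> z0 m = 2 * pi * real_of_int (i - j)" using i j by (simp add: algebra_simps)
      ultimately show "2 * pi \<le> norm (\<theta> z0 n - \<theta> z0 m)" by (simp add: abs_mult)
    qed simp
  qed
  then obtain y where "\<forall>m\<in>{0..Lmax}. \<theta> z0 m = y" unfolding constant_on_def by blast
  then show ?thesis using assms Lmax_gt_1 by simp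
qed

lemma \<theta>_upcrossing:
  assumes l: "l \<in> {0..Lmax}" and s: "s \<in> {z0..z0 + T}" and sin: "sin (\<theta> s l) = 0"
  shows "\<exists>d>0. (\<forall>t\<in>{z0..z0 + T}. s < t \<and> t < s + d \<longrightarrow> \<theta> t l > \<theta> s l) \<and>
                 (\<forall>t\<in>{z0..z0 + T}. s - d < t \<and> t < s \<longrightarrow> \<theta> t l < \<theta> s l)"
proof -
  have dv: "(v l has_real_derivative v' l s) (at s)"
    using solves_hill_v(1)[of l] unfolding solves_hill_def by blast
  have cos2: "(cos (\<theta> s l))^2 = 1" using sin sin_cos_squared_add[of "\<theta> s l"] by simp
  then have "v' l s \<noteq> 0" using prufer_polar[OF s l] \<rho>_pos[of s l] by auto
  moreover have vs: "v l s = 0" using prufer_polar(2)[OF s l] sin by simp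
  ultimately obtain d1 where d1: "d1 > 0" "\<And>t. s < t \<Longrightarrow> t < s + d1 \<Longrightarrow> v l t * v' l s > 0"
    "\<And>t. s - d1 < t \<Longrightarrow> t < s \<Longrightarrow> v l t * v' l s < 0"
    using DERIV_sign_change_at_simple_zero[OF dv] by metis
  obtain d3 where d3: "d3 > 0" "\<forall>t\<in>{z0..z0 + T}. \<bar>t - s\<bar> < d3 \<longrightarrow> \<bar>\<theta> t l - \<theta> s l\<bar> < pi"
    using \<theta>_continuous_in_point[OF l] s pi_gt_zero unfolding continuous_on_iff dist_real_def by blast
  have sign: "v l t * v' l s = \<rho> t l * \<rho> s l * sin (\<theta> t l - \<theta> s l)" if "t \<in> {z0..z0 + T}" for t
    using prufer_polar[OF that l] prufer_polar[OF s l] sin cos2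
    by (simp add: sin_diff power2_eq_square algebra_simps)
  have \<rho>\<rho>: "\<rho> t l * \<rho> s l > 0" for t using \<rho>_pos by simp
  define d where "d = min d1 d3"
  have close: "\<bar>\<theta> t l - \<theta> s l\<bar> < pi" if "t \<in> {z0..z0 + T}" "\<bar>t - s\<bar> < d" for t
    using d3(2) that by (simp add: d_def)
  have "d > 0" using d1 d3 by (simp add: d_def)
  have up: "\<theta> t l > \<theta> s l" if t: "t \<in> {z0..z0 + T}" "s < t" "t < s + d" for t
  proof -
    have "0 < v l t * v' l s" using d1(2) t by (simp add: d_def)
    then have "0 < \<rho> t l * \<rho> s l * sin (\<theta> t l - \<theta> s l)" by (simp only: sign[OF t(1)])
    then have "sin (\<theta> t l - \<theta> s l) > 0" by (rule zero_less_mult_pos[OF _ \<rho>\<rho>])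
    moreover have "\<bar>t - s\<bar> < d" using t by simp
    ultimately have "\<theta> t l - \<theta> s l > 0" using sin_pos_imp_pos close[OF t(1)] by blast
    then show ?thesis by simp
  qed
  have down: "\<theta> t l < \<theta> s l" if t: "t \<in> {z0..z0 + T}" "s - d < t" "t < s" for t
  proof -
    have "v l t * v' l s < 0" using d1(3) t by (simp add: d_def)
    then have "\<rho> t l * \<rho> s l * sin (\<theta> t l - \<theta> s l) < 0" by (simp only: sign[OF t(1)])
    then have "sin (\<theta> t l - \<theta> s l) < 0"
      using mult_nonneg_nonneg[of "\<rho> t l * \<rho> s l" "sin (\<theta> t l - \<theta> s l)"] \<rho>\<rho>[of t] by linarith
    moreover have "\<bar>t - s\<bar> < d" using t by simp
    ultimately have "\<theta> t l - \<theta> s l < 0" using sin_neg_imp_neg close[OF t(1)] by blast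
    then show ?thesis by simp
  qed
  show ?thesis
  proof (intro exI[of _ d] conjI ballI impI)
    show "d > 0" by fact
  next
    fix t assume "t \<in> {z0..z0 + T}" "s < t \<and> t < s + d"
    then show "\<theta> t l > \<theta> s l" using up by blast
  next
    fix t assume "t \<in> {z0..z0 + T}" "s - d < t \<and> t < s"
    then show "\<theta> t l < \<theta> s l" using down by blast
  qed
qed

lemma \<theta>_strictly_above:
  assumes l: "l \<in> {0..Lmax}" and a: "a \<in> {z0..z0 + T}" and sin: "sin (\<theta> a l) = 0"
    and t: "t \<in> {a<..z0 + T}"
  shows "\<theta> t l > \<theta> a l"
proof (rule gt_level_by_upcrossings[OF _ order.refl _ t])
  show "continuous_on {a..z0 + T} (\<lambda>z. \<theta> z l)"
    using continuous_on_subset[OF \<theta>_continuous_in_point[OF l]] a by auto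
  fix s assume s: "s \<in> {a..z0 + T}" "\<theta> s l = \<theta> a l"
  then have "s \<in> {z0..z0 + T}" using a by auto
  with \<theta>_upcrossing[OF l this] s sin obtain d where "d > 0"
    "\<forall>t\<in>{z0..z0 + T}. s < t \<and> t < s + d \<longrightarrow> \<theta> t l > \<theta> s l"
    "\<forall>t\<in>{z0..z0 + T}. s - d < t \<and> t < s \<longrightarrow> \<theta> t l < \<theta> s l" by auto
  then show "\<exists>d>0. (\<forall>t\<in>{a..z0 + T}. s < t \<and> t < s + d \<longrightarrow> \<theta> t l > \<theta> a l) \<and>
      (\<forall>t\<in>{a..z0 + T}. s - d < t \<and> t < s \<longrightarrow> \<theta> t l < \<theta> a l)"
    using a s by (intro exI[of _ d]) auto
qed

lemma sin_\<theta>_if_v_eq_0: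
  "z \<in> {z0..z0 + T} \<Longrightarrow> l \<in> {0..Lmax} \<Longrightarrow> v l z = 0 \<Longrightarrow> sin (\<theta> z l) = 0"
  using prufer_polar(2)[of z l] \<rho>_pos[of z l] by simp

lemma v_at_0: "v 0 z = f1 z / f2 z0"
  using solves_hill_unique[OF solves_hill_v(1)[of 0]
      solves_hill_lincomb[OF solves_hill_Q0 solves_hill_zero, of "1 / f2 z0" 0] abs_Q_le[OF order.refl], of z0 z]
    solves_hill_v f1_z0 f2_z0 by simp

lemma sin_\<theta>_start: "sin (\<theta> z0 l) = 0" if "l \<in> {0..Lmax}"
  using sin_\<theta>_if_v_eq_0[OF z0_in(1) that] solves_hill_v by simp

lemma \<theta>_end_at_0: "\<theta> (z0 + T) 0 \<ge> \<theta> z0 0 + 2 * pi"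
proof -
  have l0: "(0::real) \<in> {0..Lmax}" using Lmax_gt_1 by simp
  have z1_in: "z1 \<in> {z0..z0 + T}" using z1 by auto
  have sin_z1: "sin (\<theta> z1 0) = 0" and sin_end: "sin (\<theta> (z0 + T) 0) = 0"
    using sin_\<theta>_if_v_eq_0[OF z1_in l0] sin_\<theta>_if_v_eq_0[OF z0_in(2) l0]
      v_at_0 z1(3) f1_periodic[of z0] f1_z0 by simp_all
  have "\<theta> z0 0 + pi \<le> \<theta> z1 0"
    using sin_gap[OF sin_\<theta>_start[OF l0] sin_z1] \<theta>_strictly_above[OF l0 z0_in(1) sin_\<theta>_start[OF l0], of z1] z1
    by simp
  moreover have "\<theta> z1 0 + pi \<le> \<theta> (z0 + T) 0"
    using sin_gap[OF sin_z1 sin_end] \<theta>_strictly_above[OF l0 z1_in sin_z1, of "z0 + T"] z1 by simp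
  ultimately show ?thesis by simp
qed

lemma Q_Lmax_pos: "Q Lmax z > 0"
proof -
  have "\<gamma>^2 < \<gamma>^2 * Lmax^2" using Lmax_gt_1 gamma_neg by (simp add: one_less_power)
  moreover have "- \<gamma> \<le> \<gamma>^2"
    using mult_left_mono[of 1 "- \<gamma>" "- \<gamma>"] gamma_le_neg1 by (simp add: power2_eq_square)
  ultimately show ?thesis using Q_bounds(1)[of Lmax z] by linarith
qed

lemma v'_Lmax_ge_1: "t \<in> {z0..z0 + T} \<Longrightarrow> v' Lmax t \<ge> 1"
  using solves_hill_slope_ge_one[OF solves_hill_v(1) less_imp_le[OF Q_Lmax_pos], of z0 t "z0 + T"]
    solves_hill_v by simp

lemma \<theta>_end_at_Lmax: "\<theta> (z0 + T) Lmax < \<theta> z0 0 + pi / 2"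
proof (rule ccontr)
  have L: "Lmax \<in> {0..Lmax}" using Lmax_gt_1 by simp
  assume "\<not> ?thesis"
  then obtain z where z: "z \<in> {z0..z0 + T}" "\<theta> z Lmax = \<theta> z0 0 + pi / 2"
    using IVT'[of "\<lambda>z. \<theta> z Lmax" z0 "\<theta> z0 0 + pi / 2" "z0 + T"] \<theta>_continuous_in_point[OF L]
      \<theta>_start[OF L] T_pos by auto
  then have "v' Lmax z = 0"
    using prufer_polar(1)[OF z(1) L] sin_\<theta>_start[of 0] Lmax_gt_1 by (simp add: cos_add)
  with v'_Lmax_ge_1[OF z(1)] show False by simp
qed

lemma exists_antiperiodic_v: "\<exists>l. 0 < l \<and> l \<le> Lmax \<and> v l (z0 + T) = 0 \<and> v' l (z0 + T) < 0"
proof -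
  have "\<theta> (z0 + T) Lmax \<le> \<theta> z0 0 + pi" "\<theta> z0 0 + pi \<le> \<theta> (z0 + T) 0"
    using \<theta>_end_at_Lmax \<theta>_end_at_0 pi_gt_zero by linarith+
  then obtain l where l: "0 \<le> l" "l \<le> Lmax" "\<theta> (z0 + T) l = \<theta> z0 0 + pi"
    using IVT2'[of "\<lambda>l. \<theta> (z0 + T) l" Lmax "\<theta> z0 0 + pi" 0] \<theta>_continuous_in_parameter[OF z0_in(2)]
      Lmax_gt_1 by auto
  moreover have "l \<noteq> 0" using l(3) \<theta>_end_at_0 pi_gt_zero by auto
  moreover have "cos (\<theta> z0 0) = 1" "sin (\<theta> z0 0) = 0"
    using cos_\<theta>_start[of 0] sin_\<theta>_start[of 0] Lmax_gt_1 by auto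
  ultimately show ?thesis
    using prufer_polar[OF z0_in(2), of l] \<rho>_pos[of "z0 + T" l] by (intro exI[of _ l]) auto
qed

text \<open>Trace of the monodromy of the Hill equation minus \<open>\<kappa> + 1/\<kappa>\<close> for \<open>\<kappa> = exp(-c\<gamma>\<lambda>T)\<close>.\<close>

definition "discr l = u l (z0 + T) + v' l (z0 + T) - (exp (c * \<gamma> * l * T) + exp (- (c * \<gamma> * l * T)))"

lemma discr_continuous: "continuous_on {0..Lmax} discr"
proof -
  have "continuous_on {0..Lmax} ((\<lambda>(z, l). (fst (hill_sol (Q l) z0 \<xi> \<eta>) z, snd (hill_sol (Q l) z0 \<xi> \<eta>) z))
      \<circ> (\<lambda>l. (z0 + T, l)))" for \<xi> \<eta>
    using T_pos by (intro continuous_on_compose continuous_on_subset[OF hill_sol_Q_continuous])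
      (auto intro!: continuous_intros simp: dist_real_def)
  from continuous_on_fst[OF this[of 1 0]] continuous_on_snd[OF this[of 0 1]]
  show ?thesis unfolding discr_def u_def v'_def o_def by (auto intro!: continuous_intros)
qed

lemma discr_neg: "\<exists>l. 0 < l \<and> l \<le> Lmax \<and> discr l < 0"
proof -
  obtain l where l: "0 < l" "l \<le> Lmax" "v l (z0 + T) = 0" "v' l (z0 + T) < 0"
    using exists_antiperiodic_v by blast
  have "u l (z0 + T) * v' l (z0 + T) = 1"
    using solves_hill_wronskian[OF solves_hill_u(1) solves_hill_v(1), of l "z0 + T" z0]
      solves_hill_u solves_hill_v l(3) by simp
  \<comment> \<open>so u + v' = v' + 1/v' \<le> -2\<close>
  then have "(u l (z0 + T) + v' l (z0 + T) + 2) * v' l (z0 + T) = (v' l (z0 + T) + 1)^2"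
    by (simp add: algebra_simps power2_eq_square)
  then have "0 \<le> (u l (z0 + T) + v' l (z0 + T) + 2) * v' l (z0 + T)" by simp
  then have "u l (z0 + T) + v' l (z0 + T) + 2 \<le> 0"
    using l(4) by (auto simp: zero_le_mult_iff)
  moreover have "exp (c * \<gamma> * l * T) + exp (- (c * \<gamma> * l * T)) > 0" by (simp add: add_pos_pos)
  ultimately show ?thesis using l by (intro exI[of _ l]) (simp add: discr_def)
qed

lemma discr_Lmax_pos: "discr Lmax > 0"
proof -
  define g where "g = - \<gamma>"
  define k where "k = sqrt (g^2 * Lmax^2 - g)"
  define a where "a = c * \<gamma> * Lmax * T"
  have g: "g \<ge> 1" using gamma_le_neg1 by (simp add: g_def)
  have "2 * g \<le> 2 * g * Lmax" using g Lmax_gt_1 mult_left_mono[of 1 Lmax "2 * g"] by simp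
  then have "g + 1 \<le> 2 * g * Lmax" using g by linarith
  then have sq: "(g * Lmax - 1)^2 \<le> g^2 * Lmax^2 - g" by (simp add: power2_eq_square algebra_simps)
  then have k_ge: "g * Lmax - 1 \<le> k" unfolding k_def by (rule real_le_rsqrt)
  have "0 \<le> g^2 * Lmax^2 - g" using sq zero_le_power2[of "g * Lmax - 1"] by linarith
  then have "k^2 = \<gamma>^2 * Lmax^2 + \<gamma>" by (simp add: k_def g_def)
  then have u_ge: "u Lmax (z0 + T) \<ge> (exp (k * T) + exp (- (k * T))) / 2"
    using solves_hill_ge_cosh[OF solves_hill_u(1)[of Lmax], of z0 "z0 + T" k "z0 + T"] solves_hill_u
      Q_bounds(1) T_pos
    by simp
  have "g * Lmax * (1 - \<bar>c\<bar>) = g * (1 - \<bar>c\<bar>) + (1 + 2 / T)"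
    using g abs_c_less_1 by (simp add: Lmax_def g_def[symmetric] field_simps)
  moreover have "g * (1 - \<bar>c\<bar>) > 0" using g abs_c_less_1 by simp
  ultimately have "2 / T \<le> g * Lmax * (1 - \<bar>c\<bar>) - 1" by simp
  then have "2 \<le> (g * Lmax * (1 - \<bar>c\<bar>) - 1) * T" using T_pos by (simp add: field_simps)
  also have "\<dots> \<le> (k - \<bar>c\<bar> * g * Lmax) * T"
    using k_ge T_pos by (intro mult_right_mono) (auto simp: algebra_simps)
  finally have kT: "\<bar>a\<bar> + 2 \<le> k * T"
    using g Lmax_gt_1 T_pos by (simp add: a_def g_def abs_mult algebra_simps)
  have "4 \<le> exp (2::real)"
    using mult_mono[OF exp_ge_add_one_self[of 1] exp_ge_add_one_self[of 1]] by (simp flip: exp_add)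
  then have "exp \<bar>a\<bar> * 4 \<le> exp \<bar>a\<bar> * exp 2" by simp
  also have "\<dots> \<le> exp (k * T)" using kT by (simp flip: exp_add)
  finally have exp_kT: "exp \<bar>a\<bar> * 4 \<le> exp (k * T)" .
  have "exp a + exp (- a) \<le> exp \<bar>a\<bar> + exp \<bar>a\<bar>" by (intro add_mono) simp_all
  also have "\<dots> \<le> exp (k * T) / 2" using exp_kT by simp
  also have "\<dots> < (exp (k * T) + exp (- (k * T))) / 2" by simp
  also have "\<dots> \<le> u Lmax (z0 + T)" by (rule u_ge)
  finally have "exp a + exp (- a) < u Lmax (z0 + T)" .
  then show ?thesis
    using v'_Lmax_ge_1[OF z0_in(2)] by (simp add: discr_def a_def)
qed

lemma exists_discr_root: "\<exists>l. 0 < l \<and> discr l = 0"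
proof -
  obtain l where l: "0 < l" "l \<le> Lmax" "discr l < 0" using discr_neg by blast
  then obtain m where "l \<le> m" "m \<le> Lmax" "discr m = 0"
    using IVT'[of discr l 0 Lmax] continuous_on_subset[OF discr_continuous, of "{l..Lmax}"] discr_Lmax_pos
    by auto
  with l show ?thesis by (intro exI[of _ m]) auto
qed

lemma exists_positive_spectral_point:
  "\<exists>l::real. l > 0 \<and> complex_of_real l \<in> specP c f \<and> floquet_multiplier c f T (complex_of_real l) 1"
proof -
  obtain l where l: "0 < l" "discr l = 0" using exists_discr_root by blast
  define \<kappa> where "\<kappa> = exp (- (c * \<gamma> * l * T))"
  have "1 / \<kappa> = exp (c * \<gamma> * l * T)" by (simp add: \<kappa>_def exp_minus inverse_eq_divide)
  then have trace: "u l (z0 + T) + v' l (z0 + T) = \<kappa> + 1 / \<kappa>"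
    using l(2) by (simp add: discr_def \<kappa>_def)
  have "\<kappa> \<noteq> 0" by (simp add: \<kappa>_def)
  obtain w w' where hw: "solves_hill (Q l) w w'" and nz: "w z0 \<noteq> 0 \<or> w' z0 \<noteq> 0"
    and per: "\<And>z. w (z + T) = \<kappa> * w z \<and> w' (z + T) = \<kappa> * w' z"
    by (rule solves_hill_floquet_solution[OF abs_Q_le[OF order.refl] Q_periodic
          solves_hill_u[of l] solves_hill_v[of l] trace \<open>\<kappa> \<noteq> 0\<close>]) blast
  have per': "w (z + T) = exp (- (c * \<gamma> * l * T)) * w z \<and> w' (z + T) = exp (- (c * \<gamma> * l * T)) * w' z"
    for z using per[of z] by (simp add: \<kappa>_def)
  note spectral = spectral_point_of_hill_floquet_solution[of l w w' z0, OF hw nz per']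
  show ?thesis using spectral l(1) by (intro exI[of _ l]) simp
qed

end

theorem proposition5p1:
  fixes c E T :: real and f :: "real \<Rightarrow> real"
  assumes "subluminal_librational c f E"
    and "fundamental_period f T"
  shows "\<exists>lam::real. lam > 0 \<and> complex_of_real lam \<in> specP c f \<and>
           floquet_multiplier c f T (complex_of_real lam) 1"
proof -
  interpret librational_wave c E T f
    using assms by unfold_locales
  obtain z0 where z0: "f1 z0 = 0" "f2 z0 \<noteq> 0" "\<And>y. f y \<le> f z0"
    using exists_max_turning_point by blast
  then obtain z1 where "z0 < z1" "z1 < z0 + T" "f1 z1 = 0"
    using exists_min_turning_point by blast
  with z0 interpret wave_turning_points c E T f z0 z1
    by unfold_locales
  show ?thesis
    by (rule exists_positive_spectral_point)
qed

end
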